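(* Let $\mathcal{A}$ be a commutative domain of essentially finite type over a field $K$ of arbitrary characteristic, $R$ a subalgebra of $\mathcal{D}(\mathcal{A})$ containing $\mathcal{A}$, and $S$ a multiplicative subset of $\mathcal{A}\setminus\{0\}$. Then $S$ is a (left and right) denominator set of $R$ consisting of regular elements, and $S^{-1}\mathcal{A}\subseteq S^{-1}R\subseteq S^{-1}\mathcal{D}(\mathcal{A})\cong\mathcal{D}(S^{-1}\mathcal{A})$. If, in addition, $S^{-1}R=S^{-1}\mathcal{D}(\mathcal{A})$, then $R$ is an essential left and right $R$-submodule of $\mathcal{D}(\mathcal{A})$.
   Context: Essentially finite type: a localization of a finitely generated commutative $K$-algebra. $\mathcal{D}(\mathcal{A})=\bigcup_{i\ge0}\mathcal{D}(\mathcal{A})_i\subseteq\mathrm{End}_K(\mathcal{A})$ with $\mathcal{D}(\mathcal{A})_{-1}=0$, $\mathcal{D}(\mathcal{A})_i=\{u\mid au-ua\in\mathcal{D}(\mathcal{A})_{i-1}\ \forall a\in\mathcal{A}\}$, $\mathcal{A}=\mathcal{D}(\mathcal{A})_0$. A submodule is essential if it has nonzero intersection with every nonzero submodule. *)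

theory Defs
  imports Main
begin

text \<open>The commutative domain A is represented as a subring of an ambient field 'f
 (e.g. its fraction field); the base field K is a subfield of 'f contained in A.
 Operators on a carrier C are functions 'f => 'f that vanish outside C.\<close>

definition sub_ring :: "'f::field set \<Rightarrow> bool" where
  "sub_ring B \<longleftrightarrow> 0 \<in> B \<and> 1 \<in> B \<and> (\<forall>x\<in>B. \<forall>y\<in>B. x + y \<in> B \<and> x * y \<in> B) \<and> (\<forall>x\<in>B. - x \<in> B)"

definition sub_field :: "'f::field set \<Rightarrow> bool" where
  "sub_field K \<longleftrightarrow> sub_ring K \<and> (\<forall>x\<in>K. x \<noteq> 0 \<longrightarrow> inverse x \<in> K)"

definition alg_gen :: "'f::field set \<Rightarrow> 'f set \<Rightarrow> 'f set" where
  "alg_gen K G = \<Inter>{B. sub_ring B \<and> K \<union> G \<subseteq> B}"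

definition mult_closed :: "'f::field set \<Rightarrow> bool" where
  "mult_closed T \<longleftrightarrow> 1 \<in> T \<and> (\<forall>x\<in>T. \<forall>y\<in>T. x * y \<in> T)"

definition ess_finite_type :: "'f::field set \<Rightarrow> 'f set \<Rightarrow> bool" where
  "ess_finite_type K A \<longleftrightarrow> (\<exists>G T. finite G \<and> G \<subseteq> A \<and> T \<subseteq> alg_gen K G \<and> mult_closed T \<and> 0 \<notin> T
      \<and> A = {b / t | b t. b \<in> alg_gen K G \<and> t \<in> T})"

definition loc :: "'f::field set \<Rightarrow> 'f set \<Rightarrow> 'f set" where
  "loc S A = {a / s | a s. a \<in> A \<and> s \<in> S}"

definition mulop :: "'f::field set \<Rightarrow> 'f \<Rightarrow> ('f \<Rightarrow> 'f)" where
  "mulop C a = (\<lambda>x. if x \<in> C then a * x else 0)"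

definition fzero :: "'f::field \<Rightarrow> 'f" where "fzero = (\<lambda>_. 0)"
definition fadd :: "('f::field \<Rightarrow> 'f) \<Rightarrow> ('f \<Rightarrow> 'f) \<Rightarrow> ('f \<Rightarrow> 'f)" where
  "fadd u v = (\<lambda>x. u x + v x)"
definition fneg :: "('f::field \<Rightarrow> 'f) \<Rightarrow> ('f \<Rightarrow> 'f)" where
  "fneg u = (\<lambda>x. - u x)"

definition endK :: "'f::field set \<Rightarrow> 'f set \<Rightarrow> ('f \<Rightarrow> 'f) set" where
  "endK K C = {u. (\<forall>x. x \<notin> C \<longrightarrow> u x = 0) \<and> (\<forall>x\<in>C. u x \<in> C)
     \<and> (\<forall>x\<in>C. \<forall>y\<in>C. u (x + y) = u x + u y) \<and> (\<forall>k\<in>K. \<forall>x\<in>C. u (k * x) = k * u x)}"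

definition comm :: "'f::field set \<Rightarrow> 'f \<Rightarrow> ('f \<Rightarrow> 'f) \<Rightarrow> ('f \<Rightarrow> 'f)" where
  "comm C a u = (\<lambda>x. mulop C a (u x) - u (mulop C a x))"

text \<open>Dord K C i = D(C)_i (index i of the paper)\<close>
fun Dord :: "'f::field set \<Rightarrow> 'f set \<Rightarrow> nat \<Rightarrow> ('f \<Rightarrow> 'f) set" where
  "Dord K C 0 = {u \<in> endK K C. \<forall>a\<in>C. comm C a u = fzero}"
| "Dord K C (Suc i) = {u \<in> endK K C. \<forall>a\<in>C. comm C a u \<in> Dord K C i}"

definition Diff :: "'f::field set \<Rightarrow> 'f set \<Rightarrow> ('f \<Rightarrow> 'f) set" where
  "Diff K C = (\<Union>i. Dord K C i)"

definition subalg_containing :: "('f::field \<Rightarrow> 'f) set \<Rightarrow> 'f set \<Rightarrow> 'f set \<Rightarrow> bool" where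
  "subalg_containing R K A \<longleftrightarrow> R \<subseteq> Diff K A \<and> mulop A ` A \<subseteq> R \<and>
     (\<forall>u\<in>R. \<forall>v\<in>R. fadd u v \<in> R \<and> u \<circ> v \<in> R) \<and> (\<forall>u\<in>R. fneg u \<in> R)"

definition left_denominator_set :: "('f::field \<Rightarrow> 'f) set \<Rightarrow> ('f \<Rightarrow> 'f) set \<Rightarrow> bool" where
  "left_denominator_set R S \<longleftrightarrow> S \<subseteq> R \<and>
     (\<forall>s\<in>S. \<forall>r\<in>R. \<exists>s'\<in>S. \<exists>r'\<in>R. s' \<circ> r = r' \<circ> s) \<and>
     (\<forall>s\<in>S. \<forall>r\<in>R. r \<circ> s = fzero \<longrightarrow> (\<exists>s'\<in>S. s' \<circ> r = fzero))"

definition right_denominator_set :: "('f::field \<Rightarrow> 'f) set \<Rightarrow> ('f \<Rightarrow> 'f) set \<Rightarrow> bool" where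
  "right_denominator_set R S \<longleftrightarrow> S \<subseteq> R \<and>
     (\<forall>s\<in>S. \<forall>r\<in>R. \<exists>s'\<in>S. \<exists>r'\<in>R. r \<circ> s' = s \<circ> r') \<and>
     (\<forall>s\<in>S. \<forall>r\<in>R. s \<circ> r = fzero \<longrightarrow> (\<exists>s'\<in>S. r \<circ> s' = fzero))"

definition regular_in :: "('f::field \<Rightarrow> 'f) set \<Rightarrow> ('f \<Rightarrow> 'f) \<Rightarrow> bool" where
  "regular_in R s \<longleftrightarrow> (\<forall>r\<in>R. s \<circ> r = fzero \<longrightarrow> r = fzero) \<and> (\<forall>r\<in>R. r \<circ> s = fzero \<longrightarrow> r = fzero)"

definition op_ring :: "('f::field \<Rightarrow> 'f) set \<Rightarrow> ('f \<Rightarrow> 'f) \<Rightarrow> bool" where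
  "op_ring Q one \<longleftrightarrow> one \<in> Q \<and> fzero \<in> Q \<and> (\<forall>u\<in>Q. \<forall>v\<in>Q. fadd u v \<in> Q \<and> u \<circ> v \<in> Q)
     \<and> (\<forall>u\<in>Q. fneg u \<in> Q) \<and> (\<forall>u\<in>Q. one \<circ> u = u \<and> u \<circ> one = u)"

definition frac_hom :: "('f::field \<Rightarrow> 'f) set \<Rightarrow> ('f \<Rightarrow> 'f) \<Rightarrow> ('f \<Rightarrow> 'f) set \<Rightarrow> ('f \<Rightarrow> 'f)
     \<Rightarrow> (('f \<Rightarrow> 'f) \<Rightarrow> ('f \<Rightarrow> 'f)) \<Rightarrow> bool" where
  "frac_hom R oneR Q oneQ \<phi> \<longleftrightarrow> op_ring Q oneQ \<and> (\<forall>r\<in>R. \<phi> r \<in> Q) \<and> \<phi> oneR = oneQ \<and>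
     (\<forall>r\<in>R. \<forall>r'\<in>R. \<phi> (fadd r r') = fadd (\<phi> r) (\<phi> r') \<and> \<phi> (r \<circ> r') = \<phi> r \<circ> \<phi> r')"

text \<open>Q (via phi) is a left ring of fractions S^{-1}R (elements s^{-1} r), resp. a right ring of
 fractions R S^{-1} (elements r s^{-1}); this characterizes the Ore localization up to iso.\<close>
definition left_ring_of_fractions where
  "left_ring_of_fractions R oneR S Q oneQ \<phi> \<longleftrightarrow> frac_hom R oneR Q oneQ \<phi> \<and>
     (\<forall>s\<in>S. \<exists>t\<in>Q. t \<circ> \<phi> s = oneQ \<and> \<phi> s \<circ> t = oneQ) \<and>
     (\<forall>q\<in>Q. \<exists>s\<in>S. \<exists>r\<in>R. \<phi> s \<circ> q = \<phi> r) \<and>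
     (\<forall>r\<in>R. \<phi> r = fzero \<longleftrightarrow> (\<exists>s\<in>S. s \<circ> r = fzero))"

definition right_ring_of_fractions where
  "right_ring_of_fractions R oneR S Q oneQ \<phi> \<longleftrightarrow> frac_hom R oneR Q oneQ \<phi> \<and>
     (\<forall>s\<in>S. \<exists>t\<in>Q. t \<circ> \<phi> s = oneQ \<and> \<phi> s \<circ> t = oneQ) \<and>
     (\<forall>q\<in>Q. \<exists>s\<in>S. \<exists>r\<in>R. q \<circ> \<phi> s = \<phi> r) \<and>
     (\<forall>r\<in>R. \<phi> r = fzero \<longleftrightarrow> (\<exists>s\<in>S. r \<circ> s = fzero))"

definition ext_op :: "'f::field set \<Rightarrow> 'f set \<Rightarrow> 'f set \<Rightarrow> ('f \<Rightarrow> 'f) \<Rightarrow> ('f \<Rightarrow> 'f)" where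
  "ext_op K A SA d = (THE e. e \<in> Diff K SA \<and> (\<forall>y\<in>A. e y = d y))"

text \<open>The image of S^{-1}R inside D(S^{-1}A): operators of the form s^{-1} r.\<close>
definition frac_image where
  "frac_image Q \<phi> R S = {q \<in> Q. \<exists>s\<in>S. \<exists>r\<in>R. \<phi> s \<circ> q = \<phi> r}"

definition left_submodule :: "('f::field \<Rightarrow> 'f) set \<Rightarrow> ('f \<Rightarrow> 'f) set \<Rightarrow> ('f \<Rightarrow> 'f) set \<Rightarrow> bool" where
  "left_submodule R M N \<longleftrightarrow> N \<subseteq> M \<and> fzero \<in> N \<and> (\<forall>u\<in>N. \<forall>v\<in>N. fadd u v \<in> N)
     \<and> (\<forall>r\<in>R. \<forall>u\<in>N. r \<circ> u \<in> N)"

definition right_submodule :: "('f::field \<Rightarrow> 'f) set \<Rightarrow> ('f \<Rightarrow> 'f) set \<Rightarrow> ('f \<Rightarrow> 'f) set \<Rightarrow> bool" where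
  "right_submodule R M N \<longleftrightarrow> N \<subseteq> M \<and> fzero \<in> N \<and> (\<forall>u\<in>N. \<forall>v\<in>N. fadd u v \<in> N)
     \<and> (\<forall>r\<in>R. \<forall>u\<in>N. u \<circ> r \<in> N)"

definition essential_left :: "('f::field \<Rightarrow> 'f) set \<Rightarrow> ('f \<Rightarrow> 'f) set \<Rightarrow> ('f \<Rightarrow> 'f) set \<Rightarrow> bool" where
  "essential_left R M N \<longleftrightarrow> left_submodule R M N \<and>
     (\<forall>N'. left_submodule R M N' \<and> N' \<noteq> {fzero} \<longrightarrow> N \<inter> N' \<noteq> {fzero})"

definition essential_right :: "('f::field \<Rightarrow> 'f) set \<Rightarrow> ('f \<Rightarrow> 'f) set \<Rightarrow> ('f \<Rightarrow> 'f) set \<Rightarrow> bool" where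
  "essential_right R M N \<longleftrightarrow> right_submodule R M N \<and>
     (\<forall>N'. right_submodule R M N' \<and> N' \<noteq> {fzero} \<longrightarrow> N \<inter> N' \<noteq> {fzero})"

end

theory Submission
  imports Defs
begin

text \<open>Everything is proved by induction on the order of differential operators, using that
  commutators with multiplications lower the order.  An operator of finite order that vanishes on
  \<open>s A\<close> vanishes, so the elements of \<open>S\<close> are regular, and an operator on \<open>S\<^sup>-\<^sup>1A\<close> is determined
  by its values on \<open>A\<close>.  For \<open>u\<close> of order \<open>< n\<close> one gets \<open>u s\<^sup>n = s r\<close> and \<open>s\<^sup>n u = r' s\<close>
  with \<open>r, r'\<close> in every subalgebra containing \<open>u\<close> and \<open>A\<close>: the Ore condition.  Each
  \<open>d \<in> D(A)\<close> extends uniquely to \<open>S\<^sup>-\<^sup>1A\<close>, the extension being forced on \<open>x / s\<close> by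
  \<open>s e(x/s) = d x + [s, d](x/s)\<close>.  Conversely, because \<open>A\<close> is of essentially finite type, one
  denominator clears \<open>q 1\<close> and the commutators of \<open>q\<close> with finitely many generators, and then
  \<open>s q\<close> maps \<open>A\<close> into \<open>A\<close>; so \<open>D(S\<^sup>-\<^sup>1A)\<close> consists of fractions \<open>s\<^sup>-\<^sup>1d\<close>.  Finally, if
  \<open>S\<^sup>-\<^sup>1R = S\<^sup>-\<^sup>1D(A)\<close>, every nonzero \<open>d \<in> D(A)\<close> has nonzero multiples \<open>s d\<close> and \<open>d s'\<close> in \<open>R\<close>,
  which is essentiality on both sides.\<close>

lemma sub_ring_0 [simp]: "sub_ring C \<Longrightarrow> 0 \<in> C"
  and sub_ring_1 [simp]: "sub_ring C \<Longrightarrow> 1 \<in> C"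
  and sub_ring_add [simp]: "sub_ring C \<Longrightarrow> x \<in> C \<Longrightarrow> y \<in> C \<Longrightarrow> x + y \<in> C"
  and sub_ring_mult [simp]: "sub_ring C \<Longrightarrow> x \<in> C \<Longrightarrow> y \<in> C \<Longrightarrow> x * y \<in> C"
  and sub_ring_uminus [simp]: "sub_ring C \<Longrightarrow> x \<in> C \<Longrightarrow> - x \<in> C"
  unfolding sub_ring_def by blast+

lemma sub_ring_diff [simp]: "sub_ring C \<Longrightarrow> x \<in> C \<Longrightarrow> y \<in> C \<Longrightarrow> x - y \<in> C"
  using sub_ring_add[of C x "- y"] by simp

lemma sub_ring_power [simp]: "sub_ring C \<Longrightarrow> x \<in> C \<Longrightarrow> x ^ n \<in> C"
  by (induction n) simp_all

lemma mult_closed_power: "mult_closed S \<Longrightarrow> s \<in> S \<Longrightarrow> s ^ n \<in> S"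
  by (induction n) (auto simp: mult_closed_def)

lemma alg_gen_least: "sub_ring B \<Longrightarrow> K \<union> G \<subseteq> B \<Longrightarrow> alg_gen K G \<subseteq> B"
  unfolding alg_gen_def by blast

lemma sub_ring_alg_gen: "sub_ring (alg_gen K G)"
  unfolding alg_gen_def sub_ring_def by blast

subsection \<open>K-linear endomorphisms and commutators\<close>

lemma endK_out: "u \<in> endK K C \<Longrightarrow> x \<notin> C \<Longrightarrow> u x = 0"
  and endK_in: "u \<in> endK K C \<Longrightarrow> x \<in> C \<Longrightarrow> u x \<in> C"
  and endK_add: "u \<in> endK K C \<Longrightarrow> x \<in> C \<Longrightarrow> y \<in> C \<Longrightarrow> u (x + y) = u x + u y"
  and endK_scalar: "u \<in> endK K C \<Longrightarrow> k \<in> K \<Longrightarrow> x \<in> C \<Longrightarrow> u (k * x) = k * u x"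
  by (simp_all add: endK_def)

lemma endK_0 [simp]: "sub_ring C \<Longrightarrow> u \<in> endK K C \<Longrightarrow> u 0 = 0"
proof -
  assume "sub_ring C" "u \<in> endK K C"
  then have "u 0 + 0 = u 0 + u 0" using endK_add[of u K C 0 0] by simp
  then show ?thesis by (metis add_left_cancel)
qed

lemma endK_uminus: "sub_ring C \<Longrightarrow> u \<in> endK K C \<Longrightarrow> x \<in> C \<Longrightarrow> u (- x) = - u x"
  using endK_add[of u K C x "- x"] by (simp add: eq_neg_iff_add_eq_0 add.commute)

lemma endK_diff: "sub_ring C \<Longrightarrow> u \<in> endK K C \<Longrightarrow> x \<in> C \<Longrightarrow> y \<in> C \<Longrightarrow> u (x - y) = u x - u y"
  using endK_add[of u K C x "- y"] endK_uminus[of C u K y] by simp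

lemma endK_range: "sub_ring C \<Longrightarrow> u \<in> endK K C \<Longrightarrow> u x \<in> C"
  by (cases "x \<in> C") (auto simp: endK_in endK_out)

lemma endK_eqI:
  assumes "u \<in> endK K C" "v \<in> endK K C" "\<And>x. x \<in> C \<Longrightarrow> u x = v x"
  shows "u = v"
proof
  fix x show "u x = v x" using assms by (cases "x \<in> C") (auto simp: endK_out)
qed

lemma fzero_endK [simp]: "sub_ring C \<Longrightarrow> fzero \<in> endK K C"
  and fadd_endK: "sub_ring C \<Longrightarrow> u \<in> endK K C \<Longrightarrow> v \<in> endK K C \<Longrightarrow> fadd u v \<in> endK K C"
  and fneg_endK: "sub_ring C \<Longrightarrow> u \<in> endK K C \<Longrightarrow> fneg u \<in> endK K C"
  and comp_endK: "sub_ring C \<Longrightarrow> u \<in> endK K C \<Longrightarrow> v \<in> endK K C \<Longrightarrow> u \<circ> v \<in> endK K C"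
  and mulop_endK: "sub_ring C \<Longrightarrow> K \<subseteq> C \<Longrightarrow> a \<in> C \<Longrightarrow> mulop C a \<in> endK K C"
  by (auto simp: endK_def fzero_def fadd_def fneg_def mulop_def algebra_simps subset_iff)

lemma mulop_in [simp]: "y \<in> C \<Longrightarrow> mulop C a y = a * y"
  by (simp add: mulop_def)

lemma mulop_0: "mulop C 0 = fzero"
  by (simp add: fun_eq_iff mulop_def fzero_def)

lemma mulop_mult: "sub_ring C \<Longrightarrow> b \<in> C \<Longrightarrow> mulop C (a * b) = mulop C a \<circ> mulop C b"
  by (auto simp: fun_eq_iff mulop_def)

lemma mulop_comp_fzero [simp]: "mulop C a \<circ> fzero = fzero"
  and fzero_comp [simp]: "fzero \<circ> v = fzero"
  by (simp_all add: fun_eq_iff mulop_def fzero_def)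

lemma comp_fzero: "sub_ring C \<Longrightarrow> u \<in> endK K C \<Longrightarrow> u \<circ> fzero = fzero"
  by (simp add: fzero_def fun_eq_iff)

lemma mulop_1_comp: "sub_ring C \<Longrightarrow> u \<in> endK K C \<Longrightarrow> mulop C 1 \<circ> u = u"
  and comp_mulop_1: "sub_ring C \<Longrightarrow> u \<in> endK K C \<Longrightarrow> u \<circ> mulop C 1 = u"
  by (auto simp: fun_eq_iff endK_range mulop_def endK_out)

lemma mulop_comp_cancel:
  assumes "sub_ring C" "s \<noteq> 0" "u \<in> endK K C" "v \<in> endK K C"
    and "mulop C s \<circ> u = mulop C s \<circ> v"
  shows "u = v"
proof
  fix x
  have "s * u x = s * v x"
    using fun_cong[OF assms(5), of x] endK_range[OF assms(1,3)] endK_range[OF assms(1,4)] by simp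
  then show "u x = v x" using \<open>s \<noteq> 0\<close> by simp
qed

lemma mulop_comp_eq_fzeroD:
  assumes "sub_ring C" "s \<noteq> 0" "u \<in> endK K C" "mulop C s \<circ> u = fzero"
  shows "u = fzero"
  using mulop_comp_cancel[OF assms(1-3) fzero_endK[OF assms(1)]] assms(4) by simp

lemma comm_apply:
  "sub_ring C \<Longrightarrow> u \<in> endK K C \<Longrightarrow> a \<in> C \<Longrightarrow>
    comm C a u x = (if x \<in> C then a * u x - u (a * x) else 0)"
  by (auto simp: comm_def mulop_def endK_in endK_out)

lemma comm_eq_fadd: "comm C a u = fadd (mulop C a \<circ> u) (fneg (u \<circ> mulop C a))"
  by (simp add: comm_def fadd_def fneg_def fun_eq_iff)

lemma comm_fzero [simp]: "comm C a fzero = fzero"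
  by (simp add: comm_def mulop_def fzero_def fun_eq_iff)

lemma comm_endK:
  assumes C: "sub_ring C" and "K \<subseteq> C" and u: "u \<in> endK K C" and a: "a \<in> C"
  shows "comm C a u \<in> endK K C"
  unfolding comm_eq_fadd
  using assms by (intro fadd_endK fneg_endK comp_endK mulop_endK)

lemma comm_fadd:
  assumes C: "sub_ring C" and u: "u \<in> endK K C" and v: "v \<in> endK K C" and a: "a \<in> C"
  shows "comm C a (fadd u v) = fadd (comm C a u) (comm C a v)"
  unfolding fun_eq_iff comm_apply[OF C fadd_endK[OF C u v] a] comm_apply[OF C u a] comm_apply[OF C v a]
  using assms by (simp add: fadd_def algebra_simps endK_add)

lemma comm_fneg:
  assumes C: "sub_ring C" and u: "u \<in> endK K C" and a: "a \<in> C"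
  shows "comm C a (fneg u) = fneg (comm C a u)"
  unfolding fun_eq_iff comm_apply[OF C fneg_endK[OF C u] a] comm_apply[OF C u a]
  using assms by (simp add: fneg_def endK_uminus)

lemma comm_comp:
  assumes C: "sub_ring C" and u: "u \<in> endK K C" and v: "v \<in> endK K C" and a: "a \<in> C"
  shows "comm C a (u \<circ> v) = fadd (comm C a u \<circ> v) (u \<circ> comm C a v)"
proof
  fix x
  show "comm C a (u \<circ> v) x = fadd (comm C a u \<circ> v) (u \<circ> comm C a v) x"
    using comm_apply[OF C comp_endK[OF C u v] a] comm_apply[OF C u a] comm_apply[OF C v a] assms
    by (cases "x \<in> C") (simp_all add: fadd_def endK_range endK_out endK_diff)
qed

lemma comm_add_left:
  assumes C: "sub_ring C" and u: "u \<in> endK K C" and a: "a \<in> C" and b: "b \<in> C"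
  shows "comm C (a + b) u = fadd (comm C a u) (comm C b u)"
  unfolding fun_eq_iff comm_apply[OF C u sub_ring_add[OF C a b]] comm_apply[OF C u a] comm_apply[OF C u b]
  using assms by (simp add: fadd_def endK_add algebra_simps)

lemma comm_mult_left_apply:
  assumes C: "sub_ring C" and u: "u \<in> endK K C" and a: "a \<in> C" and b: "b \<in> C" and x: "x \<in> C"
  shows "comm C (a * b) u x = a * comm C b u x + comm C a u (b * x)"
  unfolding comm_apply[OF C u sub_ring_mult[OF C a b]] comm_apply[OF C u a] comm_apply[OF C u b]
  using assms by (simp add: algebra_simps)

lemma comm_uminus_left:
  assumes C: "sub_ring C" and u: "u \<in> endK K C" and a: "a \<in> C"
  shows "comm C (- a) u = fneg (comm C a u)"
  unfolding fun_eq_iff comm_apply[OF C u sub_ring_uminus[OF C a]] comm_apply[OF C u a]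
  using assms by (simp add: fneg_def endK_uminus)

subsection \<open>The order filtration\<close>

text \<open>\<open>Dless K C i\<close> is \<open>D(C)\<^sub>i\<^sub>-\<^sub>1\<close>, with \<open>D(C)\<^sub>-\<^sub>1 = 0\<close>; the shift gives inductions on the
  order the trivial base case \<open>{fzero}\<close>.\<close>

definition Dless :: "'f::field set \<Rightarrow> 'f set \<Rightarrow> nat \<Rightarrow> ('f \<Rightarrow> 'f) set" where
  "Dless K C i = (if i = 0 then {fzero} else Dord K C (i - 1))"

lemma Dless_0 [simp]: "Dless K C 0 = {fzero}"
  by (simp add: Dless_def)

lemma Dless_Suc: "u \<in> Dless K C (Suc i) \<longleftrightarrow> u \<in> endK K C \<and> (\<forall>a\<in>C. comm C a u \<in> Dless K C i)"
  by (cases i) (auto simp: Dless_def)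

lemma fzero_Dless [simp]: "sub_ring C \<Longrightarrow> fzero \<in> Dless K C i"
  by (induction i) (auto simp: Dless_Suc)

lemma Dless_endK: "sub_ring C \<Longrightarrow> u \<in> Dless K C i \<Longrightarrow> u \<in> endK K C"
  by (cases i) (auto simp: Dless_Suc)

lemma Dless_Suc_mono: "sub_ring C \<Longrightarrow> Dless K C i \<subseteq> Dless K C (Suc i)"
proof (induction i)
  case (Suc i)
  show ?case
  proof
    fix u assume "u \<in> Dless K C (Suc i)"
    with Suc show "u \<in> Dless K C (Suc (Suc i))"
      by (subst Dless_Suc) (auto simp: Dless_Suc)
  qed
qed (auto simp: Dless_Suc)

lemma Dless_mono: "sub_ring C \<Longrightarrow> i \<le> j \<Longrightarrow> Dless K C i \<subseteq> Dless K C j"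
  by (induction j) (use Dless_Suc_mono le_Suc_eq in blast)+

lemma Diff_eq_UN_Dless: "sub_ring C \<Longrightarrow> Diff K C = (\<Union>i. Dless K C i)"
proof -
  assume C: "sub_ring C"
  have Dord: "Dord K C i = Dless K C (Suc i)" for i
    by (simp add: Dless_def)
  have "Dless K C i \<subseteq> Dless K C (Suc (i - 1))" for i
    using C by (cases i) simp_all
  then show ?thesis
    unfolding Diff_def Dord by blast
qed

lemma DiffE:
  assumes "sub_ring C" "u \<in> Diff K C"
  obtains i where "u \<in> Dless K C i"
  using assms Diff_eq_UN_Dless by blast

lemma Dless_Diff: "sub_ring C \<Longrightarrow> u \<in> Dless K C i \<Longrightarrow> u \<in> Diff K C"
  using Diff_eq_UN_Dless by blast

lemma fadd_fzero [simp]: "fadd fzero fzero = fzero"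
  and fneg_fzero [simp]: "fneg fzero = fzero"
  by (simp_all add: fzero_def fadd_def fneg_def)

lemma fadd_Dless: "sub_ring C \<Longrightarrow> u \<in> Dless K C i \<Longrightarrow> v \<in> Dless K C i \<Longrightarrow> fadd u v \<in> Dless K C i"
  by (induction i arbitrary: u v) (auto simp: Dless_Suc fadd_endK comm_fadd)

lemma fneg_Dless: "sub_ring C \<Longrightarrow> u \<in> Dless K C i \<Longrightarrow> fneg u \<in> Dless K C i"
  by (induction i arbitrary: u) (auto simp: Dless_Suc fneg_endK comm_fneg)

lemma comp_Dless:
  assumes C: "sub_ring C"
  shows "u \<in> Dless K C (Suc i) \<Longrightarrow> v \<in> Dless K C (Suc j) \<Longrightarrow> u \<circ> v \<in> Dless K C (Suc (i + j))"
proof (induction "i + j" arbitrary: i j u v)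
  case 0
  then have u: "u \<in> endK K C" and v: "v \<in> endK K C"
    and "\<forall>a\<in>C. comm C a u = fzero \<and> comm C a v = fzero"
    by (simp_all add: Dless_Suc)
  then have "comm C a (u \<circ> v) = fzero" if "a \<in> C" for a
    using comm_comp[OF C u v that] comp_fzero[OF C u] that by simp
  then show ?case using C u v 0 comp_endK[OF C u v] unfolding Dless_Suc by simp
next
  case (Suc n)
  have u: "u \<in> endK K C" and v: "v \<in> endK K C"
    using Suc.prems by (auto simp: Dless_Suc)
  have "comm C a u \<circ> v \<in> Dless K C (Suc n)" if "a \<in> C" for a
  proof (cases i)
    case (Suc i')
    then show ?thesis using Suc.hyps Suc.prems that by (simp add: Dless_Suc[of _ _ _ "Suc i'"])
  qed (use Suc.prems that C in \<open>simp add: Dless_Suc\<close>)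
  moreover have "u \<circ> comm C a v \<in> Dless K C (Suc n)" if "a \<in> C" for a
  proof (cases j)
    case (Suc j')
    then show ?thesis using Suc.hyps Suc.prems that by (simp add: Dless_Suc[of _ _ _ "Suc j'"])
  qed (use Suc.prems that C u in \<open>simp add: Dless_Suc comp_fzero\<close>)
  ultimately show ?case
    unfolding Dless_Suc[of "u \<circ> v"] using u v C Suc.hyps(2)
    by (simp add: comp_endK comm_comp fadd_Dless)
qed

lemma mulop_Dless_1:
  assumes C: "sub_ring C" and "K \<subseteq> C" and a: "a \<in> C"
  shows "mulop C a \<in> Dless K C 1"
proof -
  have m: "mulop C a \<in> endK K C" using assms by (rule mulop_endK)
  have "comm C b (mulop C a) = fzero" if "b \<in> C" for b
    using comm_apply[OF C m that] C a that by (simp add: fun_eq_iff fzero_def)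
  then show ?thesis using m by (simp add: Dless_Suc)
qed

lemma mulop_comp_Dless:
  assumes "sub_ring C" "K \<subseteq> C" "a \<in> C" "u \<in> Dless K C n"
  shows "mulop C a \<circ> u \<in> Dless K C n"
proof (cases n)
  case (Suc m)
  then show ?thesis
    using comp_Dless[OF assms(1) mulop_Dless_1[OF assms(1-3), unfolded One_nat_def]] assms by simp
qed (use assms in simp)

lemma comp_mulop_Dless:
  assumes "sub_ring C" "K \<subseteq> C" "a \<in> C" "u \<in> Dless K C n"
  shows "u \<circ> mulop C a \<in> Dless K C n"
proof (cases n)
  case (Suc m)
  then show ?thesis
    using comp_Dless[OF assms(1) _ mulop_Dless_1[OF assms(1-3), unfolded One_nat_def]] assms by simp
qed (use assms in simp)

lemma fzero_Diff: "sub_ring C \<Longrightarrow> fzero \<in> Diff K C"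
  using Dless_Diff fzero_Dless by blast

lemma Diff_endK: "sub_ring C \<Longrightarrow> u \<in> Diff K C \<Longrightarrow> u \<in> endK K C"
  using DiffE Dless_endK by metis

lemma fneg_Diff: "sub_ring C \<Longrightarrow> u \<in> Diff K C \<Longrightarrow> fneg u \<in> Diff K C"
  using DiffE Dless_Diff fneg_Dless by metis

lemma mulop_Diff: "sub_ring C \<Longrightarrow> K \<subseteq> C \<Longrightarrow> a \<in> C \<Longrightarrow> mulop C a \<in> Diff K C"
  using Dless_Diff mulop_Dless_1 by blast

lemma fadd_Diff:
  assumes C: "sub_ring C" and "u \<in> Diff K C" "v \<in> Diff K C"
  shows "fadd u v \<in> Diff K C"
proof -
  obtain i j where "u \<in> Dless K C i" "v \<in> Dless K C j"
    using assms DiffE by metis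
  then have "u \<in> Dless K C (i + j)" "v \<in> Dless K C (i + j)"
    using Dless_mono[OF C] le_add1 le_add2 by blast+
  then show ?thesis using C by (blast intro: Dless_Diff fadd_Dless)
qed

lemma comp_Diff:
  assumes C: "sub_ring C" and "u \<in> Diff K C" "v \<in> Diff K C"
  shows "u \<circ> v \<in> Diff K C"
proof -
  obtain i j where "u \<in> Dless K C i" "v \<in> Dless K C j"
    using assms DiffE by metis
  then have "u \<in> Dless K C (Suc i)" "v \<in> Dless K C (Suc j)"
    using Dless_Suc_mono[OF C] by blast+
  then show ?thesis using C by (blast intro: Dless_Diff comp_Dless)
qed

lemma comm_Diff: "sub_ring C \<Longrightarrow> K \<subseteq> C \<Longrightarrow> a \<in> C \<Longrightarrow> u \<in> Diff K C \<Longrightarrow> comm C a u \<in> Diff K C"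
  unfolding comm_eq_fadd by (simp add: fadd_Diff fneg_Diff comp_Diff mulop_Diff)

subsection \<open>Vanishing and regularity\<close>

text \<open>By induction on the order: the commutators \<open>[b, r]\<close> with \<open>b \<in> B\<close> vanish on \<open>X\<close> as well,
  hence are zero, and then \<open>b * r c = r (b * c) = 0\<close> with \<open>b \<noteq> 0\<close>.\<close>

lemma Dless_eq_fzero_if_vanishes:
  assumes C: "sub_ring C" and "B \<subseteq> C" and "X \<subseteq> C"
    and absorb: "\<And>b x. b \<in> B \<Longrightarrow> x \<in> X \<Longrightarrow> b * x \<in> X"
    and reach: "\<And>c. c \<in> C \<Longrightarrow> \<exists>b\<in>B. b \<noteq> 0 \<and> b * c \<in> X"
  shows "r \<in> Dless K C i \<Longrightarrow> \<forall>x\<in>X. r x = 0 \<Longrightarrow> r = fzero"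
proof (induction i arbitrary: r)
  case (Suc i)
  have r: "r \<in> endK K C" using Suc.prems by (simp add: Dless_Suc)
  have comm_zero: "comm C b r = fzero" if b: "b \<in> B" for b
  proof (rule Suc.IH)
    show "comm C b r \<in> Dless K C i" using Suc.prems b \<open>B \<subseteq> C\<close> by (auto simp: Dless_Suc)
    show "\<forall>x\<in>X. comm C b r x = 0"
      using comm_apply[OF C r] absorb b \<open>B \<subseteq> C\<close> \<open>X \<subseteq> C\<close> Suc.prems by auto
  qed
  show ?case
  proof (rule endK_eqI[OF r fzero_endK[OF C]])
    fix c assume "c \<in> C"
    then obtain b where b: "b \<in> B" "b \<noteq> 0" "b * c \<in> X" using reach by blast
    have "b * r c = r (b * c)"
      using fun_cong[OF comm_zero[OF b(1)], of c] comm_apply[OF C r, of b c] \<open>c \<in> C\<close> b(1) \<open>B \<subseteq> C\<close>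
      by (auto simp: fzero_def)
    also have "\<dots> = 0" using Suc.prems b(3) by blast
    finally show "r c = fzero c" using b(2) by (simp add: fzero_def)
  qed
qed simp

lemma Dless_comp_mulop_eq_fzeroD:
  assumes C: "sub_ring C" and s: "s \<in> C" "s \<noteq> 0" and r: "r \<in> Dless K C i"
    and "r \<circ> mulop C s = fzero"
  shows "r = fzero"
proof (rule Dless_eq_fzero_if_vanishes[OF C order_refl _ _ _ r])
  show "(*) s ` C \<subseteq> C" using C s by auto
  show "b * x \<in> (*) s ` C" if "b \<in> C" "x \<in> (*) s ` C" for b x
    using that C by (auto simp: mult.left_commute)
  show "\<exists>b\<in>C. b \<noteq> 0 \<and> b * c \<in> (*) s ` C" if "c \<in> C" for c
    using that s by blast
  show "\<forall>x\<in>(*) s ` C. r x = 0"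
  proof
    fix y assume "y \<in> (*) s ` C"
    then obtain x where "x \<in> C" "y = s * x" by blast
    then show "r y = 0" using fun_cong[OF \<open>r \<circ> mulop C s = fzero\<close>, of x] by (simp add: fzero_def)
  qed
qed

subsection \<open>Subalgebras of differential operators and the Ore condition\<close>

lemma subalg_containing_Diff: "subalg_containing R K C \<Longrightarrow> R \<subseteq> Diff K C"
  and subalg_containing_mulop: "subalg_containing R K C \<Longrightarrow> a \<in> C \<Longrightarrow> mulop C a \<in> R"
  and subalg_containing_fadd: "subalg_containing R K C \<Longrightarrow> u \<in> R \<Longrightarrow> v \<in> R \<Longrightarrow> fadd u v \<in> R"
  and subalg_containing_comp: "subalg_containing R K C \<Longrightarrow> u \<in> R \<Longrightarrow> v \<in> R \<Longrightarrow> u \<circ> v \<in> R"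
  and subalg_containing_fneg: "subalg_containing R K C \<Longrightarrow> u \<in> R \<Longrightarrow> fneg u \<in> R"
  by (auto simp: subalg_containing_def)

lemma subalg_containing_fzero: "sub_ring C \<Longrightarrow> subalg_containing R K C \<Longrightarrow> fzero \<in> R"
  using subalg_containing_mulop[of R K C 0] by (simp add: mulop_0)

lemma subalg_containing_comm: "subalg_containing R K C \<Longrightarrow> a \<in> C \<Longrightarrow> u \<in> R \<Longrightarrow> comm C a u \<in> R"
  unfolding comm_eq_fadd
  by (simp add: subalg_containing_fadd subalg_containing_comp subalg_containing_fneg subalg_containing_mulop)

lemma subalg_containing_endK:
  "sub_ring C \<Longrightarrow> subalg_containing R K C \<Longrightarrow> u \<in> R \<Longrightarrow> u \<in> endK K C"
  by (meson Diff_endK subalg_containing_Diff subsetD)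

lemma subalg_containing_Dless:
  assumes "sub_ring C" "subalg_containing R K C" "u \<in> R"
  obtains n where "u \<in> Dless K C n"
  by (meson DiffE subalg_containing_Diff subsetD assms)

lemma Diff_subalg_containing: "sub_ring C \<Longrightarrow> K \<subseteq> C \<Longrightarrow> subalg_containing (Diff K C) K C"
  unfolding subalg_containing_def by (auto simp: mulop_Diff fadd_Diff comp_Diff fneg_Diff)

text \<open>Ore condition with explicit denominator: for \<open>u\<close> of order \<open>< n\<close> the identity
  \<open>u s\<^sup>n\<^sup>+\<^sup>1 = s (u s\<^sup>n) - [s, u] s\<^sup>n\<close> lets \<open>[s, u]\<close>, of order \<open>< n - 1\<close>, carry the induction.\<close>

lemma ore_right_power:
  assumes C: "sub_ring C" and R: "subalg_containing R K C" and s: "s \<in> C"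
  shows "u \<in> R \<Longrightarrow> u \<in> Dless K C n \<Longrightarrow> \<exists>r\<in>R. u \<circ> mulop C (s ^ n) = mulop C s \<circ> r"
proof (induction n arbitrary: u)
  case 0
  then have "u \<circ> mulop C (s ^ 0) = mulop C s \<circ> fzero" by simp
  then show ?case using subalg_containing_fzero[OF C R] by blast
next
  case (Suc n)
  have u: "u \<in> endK K C" using Suc.prems by (simp add: Dless_Suc)
  define w where "w = comm C s u"
  have "w \<in> R" "w \<in> Dless K C n"
    unfolding w_def using Suc.prems s subalg_containing_comm[OF R] by (auto simp: Dless_Suc)
  then obtain r where r: "r \<in> R" "w \<circ> mulop C (s ^ n) = mulop C s \<circ> r"
    using Suc.IH by blast
  have r_endK: "r \<in> endK K C" using subalg_containing_endK[OF C R r(1)] .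
  have sn: "s ^ n \<in> C" using s C by simp
  define r' where "r' = fadd (u \<circ> mulop C (s ^ n)) (fneg r)"
  have "r' \<in> R"
    unfolding r'_def using R Suc.prems(1) r(1) sn
    by (simp add: subalg_containing_fadd subalg_containing_comp subalg_containing_fneg
        subalg_containing_mulop)
  moreover have "u \<circ> mulop C (s ^ Suc n) = mulop C s \<circ> r'"
  proof
    fix x
    let ?y = "mulop C (s ^ n) x"
    have y: "?y \<in> C" using sn C by (cases "x \<in> C") (auto simp: mulop_def)
    have "s * u ?y - u (s * ?y) = s * r x"
      using fun_cong[OF r(2), of x] comm_apply[OF C u s, of ?y] y endK_range[OF C r_endK]
      by (simp add: w_def)
    moreover have "mulop C (s ^ Suc n) x = s * ?y"
      using mulop_mult[OF C sn, of s] y by simp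
    ultimately show "(u \<circ> mulop C (s ^ Suc n)) x = (mulop C s \<circ> r') x"
      unfolding r'_def using endK_range[OF C u] endK_range[OF C r_endK] C
      by (simp add: fadd_def fneg_def algebra_simps)
  qed
  ultimately show ?case by blast
qed

lemma ore_left_power:
  assumes C: "sub_ring C" and R: "subalg_containing R K C" and s: "s \<in> C"
  shows "u \<in> R \<Longrightarrow> u \<in> Dless K C n \<Longrightarrow> \<exists>r\<in>R. mulop C (s ^ n) \<circ> u = r \<circ> mulop C s"
proof (induction n arbitrary: u)
  case 0
  then have "mulop C (s ^ 0) \<circ> u = fzero \<circ> mulop C s" by simp
  then show ?case using subalg_containing_fzero[OF C R] by blast
next
  case (Suc n)
  have u: "u \<in> endK K C" using Suc.prems by (simp add: Dless_Suc)
  define w where "w = comm C s u"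
  have "w \<in> R" "w \<in> Dless K C n"
    unfolding w_def using Suc.prems s subalg_containing_comm[OF R] by (auto simp: Dless_Suc)
  then obtain r where r: "r \<in> R" "mulop C (s ^ n) \<circ> w = r \<circ> mulop C s"
    using Suc.IH by blast
  have w_endK: "w \<in> endK K C" using subalg_containing_endK[OF C R \<open>w \<in> R\<close>] .
  have sn: "s ^ n \<in> C" using s C by simp
  define r' where "r' = fadd (mulop C (s ^ n) \<circ> u) r"
  have "r' \<in> R"
    unfolding r'_def using R Suc.prems(1) r(1) sn
    by (simp add: subalg_containing_fadd subalg_containing_comp subalg_containing_mulop)
  moreover have "mulop C (s ^ Suc n) \<circ> u = r' \<circ> mulop C s"
  proof (rule endK_eqI)
    show "mulop C (s ^ Suc n) \<circ> u \<in> endK K C" "r' \<circ> mulop C s \<in> endK K C"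
      using subalg_containing_endK[OF C R] subalg_containing_mulop[OF R] Suc.prems(1) \<open>r' \<in> R\<close> C s
      by (simp_all add: comp_endK)
    fix x assume x: "x \<in> C"
    have "s ^ n * w x = r (s * x)"
      using fun_cong[OF r(2), of x] endK_range[OF C w_endK] x by simp
    then show "(mulop C (s ^ Suc n) \<circ> u) x = (r' \<circ> mulop C s) x"
      unfolding r'_def using comm_apply[OF C u s, of x] x endK_range[OF C u] C s
      by (simp add: w_def fadd_def algebra_simps)
  qed
  ultimately show ?case by blast
qed

subsection \<open>Extending differential operators to a localization\<close>

locale localized_domain =
  fixes K A S :: "'f::field set"
  assumes K_subset_A: "K \<subseteq> A" and sub_ring_A: "sub_ring A"
    and mult_closed_S: "mult_closed S" and S_subset: "S \<subseteq> A - {0}"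
begin

abbreviation L :: "'f set" where "L \<equiv> loc S A"

lemma S_in_A: "s \<in> S \<Longrightarrow> s \<in> A"
  and S_nonzero: "s \<in> S \<Longrightarrow> s \<noteq> 0"
  and one_in_S: "1 \<in> S"
  and S_mult: "s \<in> S \<Longrightarrow> t \<in> S \<Longrightarrow> s * t \<in> S"
  using S_subset mult_closed_S by (auto simp: mult_closed_def)

lemma locI: "x \<in> A \<Longrightarrow> s \<in> S \<Longrightarrow> x / s \<in> L"
  by (auto simp: loc_def)

lemma locE:
  assumes "c \<in> L"
  obtains x s where "x \<in> A" "s \<in> S" "c = x / s"
  using assms by (auto simp: loc_def)

lemma A_subset_L: "A \<subseteq> L"
  using locI[of _ 1] one_in_S by (metis div_by_1 subsetI)

lemma K_subset_L: "K \<subseteq> L"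
  using K_subset_A A_subset_L by blast

lemma inverse_in_L: "s \<in> S \<Longrightarrow> 1 / s \<in> L"
  using locI[of 1 s] sub_ring_A by simp

lemma sub_ring_L: "sub_ring L"
  unfolding sub_ring_def
proof (intro conjI ballI)
  show "0 \<in> L" "1 \<in> L" using A_subset_L sub_ring_A by auto
next
  fix x y assume "x \<in> L" "y \<in> L"
  obtain a s b t where "a \<in> A" "s \<in> S" "x = a / s" "b \<in> A" "t \<in> S" "y = b / t"
    using locE[OF \<open>x \<in> L\<close>] locE[OF \<open>y \<in> L\<close>] by metis
  moreover from this have "x + y = (a * t + b * s) / (s * t)" "x * y = (a * b) / (s * t)"
    using S_nonzero by (simp_all add: field_simps)
  ultimately show "x + y \<in> L" "x * y \<in> L"
    using sub_ring_A S_in_A S_mult by (auto intro!: locI)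
next
  fix x assume "x \<in> L"
  then obtain a s where "a \<in> A" "s \<in> S" "x = a / s" by (rule locE)
  then show "- x \<in> L" using locI[of "- a" s] sub_ring_A by simp
qed

lemma Dless_L_eq_fzero_if_vanishes_on_A:
  "e \<in> Dless K L i \<Longrightarrow> \<forall>y\<in>A. e y = 0 \<Longrightarrow> e = fzero"
proof (rule Dless_eq_fzero_if_vanishes[OF sub_ring_L A_subset_L A_subset_L])
  show "b * x \<in> A" if "b \<in> A" "x \<in> A" for b x
    using that sub_ring_A by simp
  show "\<exists>b\<in>A. b \<noteq> 0 \<and> b * c \<in> A" if c: "c \<in> L" for c
  proof -
    obtain x s where "x \<in> A" "s \<in> S" "c = x / s" using c by (rule locE)
    then show ?thesis using S_in_A S_nonzero by (intro bexI[of _ s]) auto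
  qed
qed

lemma Diff_L_eqI:
  assumes "e1 \<in> Diff K L" "e2 \<in> Diff K L" "\<forall>y\<in>A. e1 y = e2 y"
  shows "e1 = e2"
proof -
  have "fadd e1 (fneg e2) \<in> Diff K L"
    using assms sub_ring_L by (simp add: fadd_Diff fneg_Diff)
  then obtain i where "fadd e1 (fneg e2) \<in> Dless K L i"
    using sub_ring_L by (blast elim: DiffE)
  moreover have "\<forall>y\<in>A. fadd e1 (fneg e2) y = 0"
    using assms(3) by (simp add: fadd_def fneg_def)
  ultimately have "fadd e1 (fneg e2) = fzero"
    by (rule Dless_L_eq_fzero_if_vanishes_on_A)
  then show ?thesis by (simp add: fun_eq_iff fadd_def fneg_def fzero_def)
qed

end

locale extension_step = localized_domain +
  fixes d and n :: nat and E
  assumes d_Dless: "d \<in> Dless K A (Suc n)"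
    and E_Dless: "\<And>a. a \<in> A \<Longrightarrow> E a \<in> Dless K L n"
    and E_extends: "\<And>a y. a \<in> A \<Longrightarrow> y \<in> A \<Longrightarrow> E a y = comm A a d y"
begin

lemma d_endK: "d \<in> endK K A"
  using d_Dless by (simp add: Dless_Suc)

lemma E_apply: "a \<in> A \<Longrightarrow> y \<in> A \<Longrightarrow> E a y = a * d y - d (a * y)"
  using E_extends comm_apply[OF sub_ring_A d_endK] by simp

lemma E_endK: "a \<in> A \<Longrightarrow> E a \<in> endK K L"
  using E_Dless Dless_endK[OF sub_ring_L] by blast

lemma E_Diff: "a \<in> A \<Longrightarrow> E a \<in> Diff K L"
  using E_Dless Dless_Diff[OF sub_ring_L] by blast

text \<open>Both sides extend \<open>[b, [t, d]] = [t, [b, d]]\<close>.\<close>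

lemma comm_E_swap:
  assumes b: "b \<in> A" and t: "t \<in> A"
  shows "comm L b (E t) = comm L t (E b)"
proof (rule Diff_L_eqI)
  show "comm L b (E t) \<in> Diff K L" "comm L t (E b) \<in> Diff K L"
    using comm_Diff[OF sub_ring_L K_subset_L] E_Diff t b A_subset_L by blast+
  show "\<forall>y\<in>A. comm L b (E t) y = comm L t (E b) y"
  proof
    fix y assume y: "y \<in> A"
    have by': "b * y \<in> A" "t * y \<in> A" using b t y sub_ring_A by auto
    have bL: "b \<in> L" "t \<in> L" "y \<in> L" using A_subset_L b t y by blast+
    have "comm L b (E t) y = b * E t y - E t (b * y)"
      using comm_apply[OF sub_ring_L E_endK[OF t] bL(1), of y] bL by simp
    also have "\<dots> = b * (t * d y - d (t * y)) - (t * d (b * y) - d (t * (b * y)))"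
      using E_apply t y by' by simp
    also have "\<dots> = t * (b * d y - d (b * y)) - (b * d (t * y) - d (b * (t * y)))"
      by (simp add: algebra_simps)
    also have "\<dots> = t * E b y - E b (t * y)"
      using E_apply b y by' by simp
    also have "\<dots> = comm L t (E b) y"
      using comm_apply[OF sub_ring_L E_endK[OF b] bL(2), of y] bL by simp
    finally show "comm L b (E t) y = comm L t (E b) y" .
  qed
qed

lemma comm_E_swap_apply:
  assumes b: "b \<in> A" and t: "t \<in> A" and c: "c \<in> L"
  shows "b * E t c - E t (b * c) = t * E b c - E b (t * c)"
proof -
  have "b \<in> L" "t \<in> L" using A_subset_L b t by blast+
  then show ?thesis
    using fun_cong[OF comm_E_swap[OF b t], of c] c
      comm_apply[OF sub_ring_L E_endK[OF t] \<open>b \<in> L\<close>, of c]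
      comm_apply[OF sub_ring_L E_endK[OF b] \<open>t \<in> L\<close>, of c]
    by simp
qed

text \<open>An extension \<open>e\<close> must satisfy \<open>s * e c - e (s * c) = E s c\<close>; for \<open>c = x / s\<close> this forces
  \<open>e c = (d x + E s c) / s\<close>, which we take as the definition.\<close>

lemma extension_formula_well_defined:
  assumes x: "x \<in> A" "s \<in> S" "c = x / s" and x': "x' \<in> A" "s' \<in> S" "c = x' / s'"
  shows "(d x + E s c) / s = (d x' + E s' c) / s'"
proof -
  have nz: "s \<noteq> 0" "s' \<noteq> 0" and sA: "s \<in> A" "s' \<in> A"
    using x x' S_nonzero S_in_A by auto
  have c: "c \<in> L" using x locI by blast
  have "x = s * c" using x(3) nz(1) by simp
  moreover have "x' = s' * c" using x'(3) nz(2) by simp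
  ultimately have xe: "x = s * c" "x' = s' * c" by blast+
  have "E s' x - E s x' = s' * d x - s * d x'"
    using E_apply[OF sA(2) x(1)] E_apply[OF sA(1) x'(1)] xe by (simp add: ac_simps)
  moreover have "s * E s' c - E s' x = s' * E s c - E s x'"
    unfolding xe using comm_E_swap_apply sA c by blast
  ultimately have "s' * (d x + E s c) = s * (d x' + E s' c)"
    by algebra
  then show ?thesis using nz by (simp add: field_simps)
qed

definition d_ext where
  "d_ext c = (if c \<in> L then (let p = SOME p. fst p \<in> A \<and> snd p \<in> S \<and> c = fst p / snd p in
      (d (fst p) + E (snd p) c) / snd p) else 0)"

lemma d_ext_formula:
  assumes "x \<in> A" "s \<in> S" "c = x / s"
  shows "d_ext c = (d x + E s c) / s"
proof -
  let ?P = "\<lambda>p. fst p \<in> A \<and> snd p \<in> S \<and> c = fst p / snd p"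
  have "?P (x, s)" using assms by simp
  then have P: "?P (SOME p. ?P p)" by (rule someI)
  have "c \<in> L" using assms locI by blast
  then have "d_ext c = (d (fst (SOME p. ?P p)) + E (snd (SOME p. ?P p)) c) / snd (SOME p. ?P p)"
    by (simp add: d_ext_def Let_def)
  also have "\<dots> = (d x + E s c) / s"
    using extension_formula_well_defined P assms by blast
  finally show ?thesis .
qed

lemma d_ext_in_L: "d_ext c \<in> L"
proof (cases "c \<in> L")
  case True
  then obtain x s where xs: "x \<in> A" "s \<in> S" "c = x / s" by (rule locE)
  have "d x + E s c \<in> L"
    using endK_in[OF d_endK xs(1)] A_subset_L endK_range[OF sub_ring_L E_endK[OF S_in_A[OF xs(2)]]]
      sub_ring_L by auto
  then have "(d x + E s c) * (1 / s) \<in> L"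
    using sub_ring_mult[OF sub_ring_L _ inverse_in_L[OF xs(2)]] by blast
  then show ?thesis using d_ext_formula[OF xs] by simp
qed (simp add: d_ext_def sub_ring_L)

lemma d_ext_add:
  assumes c: "c \<in> L" and c': "c' \<in> L"
  shows "d_ext (c + c') = d_ext c + d_ext c'"
proof -
  obtain x s where xs: "x \<in> A" "s \<in> S" "c = x / s" using c by (rule locE)
  obtain x' s' where xs': "x' \<in> A" "s' \<in> S" "c' = x' / s'" using c' by (rule locE)
  have nz: "s \<noteq> 0" "s' \<noteq> 0" using xs xs' S_nonzero by auto
  have ss: "s * s' \<in> S" "s * s' \<in> A" using xs xs' S_mult S_in_A by auto
  have A1: "x * s' \<in> A" "x' * s \<in> A" using xs xs' S_in_A sub_ring_A by auto
  have r1: "c = (x * s') / (s * s')" and r2: "c' = (x' * s) / (s * s')"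
    and r3: "c + c' = (x * s' + x' * s) / (s * s')"
    using xs xs' nz by (auto simp: field_simps)
  have "d_ext (c + c') = (d (x * s' + x' * s) + E (s * s') (c + c')) / (s * s')"
    using d_ext_formula[OF _ ss(1) r3] A1 sub_ring_A by auto
  also have "\<dots> = (d (x * s') + E (s * s') c) / (s * s') + (d (x' * s) + E (s * s') c') / (s * s')"
    using endK_add[OF d_endK A1] endK_add[OF E_endK[OF ss(2)] c c']
    by (simp add: add_divide_distrib algebra_simps)
  also have "\<dots> = d_ext c + d_ext c'"
    using d_ext_formula[OF A1(1) ss(1) r1] d_ext_formula[OF A1(2) ss(1) r2] by simp
  finally show ?thesis .
qed

lemma d_ext_scalar:
  assumes k: "k \<in> K" and c: "c \<in> L"
  shows "d_ext (k * c) = k * d_ext c"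
proof -
  obtain x s where xs: "x \<in> A" "s \<in> S" "c = x / s" using c by (rule locE)
  have kx: "k * x \<in> A" using k K_subset_A xs sub_ring_A by auto
  have "d_ext (k * c) = (d (k * x) + E s (k * c)) / s"
    using d_ext_formula[OF kx xs(2)] xs by simp
  also have "\<dots> = k * ((d x + E s c) / s)"
    using endK_scalar[OF d_endK k xs(1)] endK_scalar[OF E_endK[OF S_in_A[OF xs(2)]] k c]
    by (simp add: algebra_simps)
  also have "\<dots> = k * d_ext c" using d_ext_formula[OF xs] by simp
  finally show ?thesis .
qed

lemma d_ext_endK: "d_ext \<in> endK K L"
proof -
  have "d_ext c = 0" if "c \<notin> L" for c using that by (simp add: d_ext_def)
  then show ?thesis unfolding endK_def using d_ext_in_L d_ext_add d_ext_scalar by blast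
qed

lemma d_ext_extends:
  assumes y: "y \<in> A"
  shows "d_ext y = d y"
proof -
  have "d_ext y = (d y + E 1 y) / 1" using d_ext_formula[OF y one_in_S] by simp
  also have "E 1 y = 0" using E_apply[of 1 y] y sub_ring_A by simp
  finally show ?thesis by simp
qed

lemma comm_d_ext_A:
  assumes b: "b \<in> A"
  shows "comm L b d_ext = E b"
proof (rule endK_eqI)
  show "comm L b d_ext \<in> endK K L" "E b \<in> endK K L"
    using comm_endK[OF sub_ring_L K_subset_L d_ext_endK] b A_subset_L E_endK by auto
  fix c assume "c \<in> L"
  then obtain x s where xs: "x \<in> A" "s \<in> S" "c = x / s" by (rule locE)
  have nz: "s \<noteq> 0" and sA: "s \<in> A" using xs S_nonzero S_in_A by auto
  have bx: "b * x \<in> A" using b xs sub_ring_A by auto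
  have bc: "b * c = (b * x) / s" and x: "x = s * c" using xs nz by simp_all
  have "comm L b d_ext c = b * d_ext c - d_ext (b * c)"
    using comm_apply[OF sub_ring_L d_ext_endK, of b c] b A_subset_L \<open>c \<in> L\<close> by auto
  also have "\<dots> = b * ((d x + E s c) / s) - (d (b * x) + E s (b * c)) / s"
    using d_ext_formula[OF xs] d_ext_formula[OF bx xs(2) bc] by simp
  also have "\<dots> = (b * d x - d (b * x) + (b * E s c - E s (b * c))) / s"
    by (simp add: diff_divide_distrib algebra_simps)
  also have "\<dots> = (E b (s * c) + (s * E b c - E b (s * c))) / s"
    using E_apply[OF b xs(1)] comm_E_swap_apply[OF b sA \<open>c \<in> L\<close>] x by simp
  also have "\<dots> = E b c" using nz by simp
  finally show "comm L b d_ext c = E b c" .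
qed

text \<open>For \<open>c = b / t\<close>: \<open>[c, d_ext] = t\<^sup>-\<^sup>1 ([b, d_ext] - [t, d_ext] c) = t\<^sup>-\<^sup>1 (E b - E t c)\<close>,
  which has order \<open>< n\<close>.\<close>

lemma comm_d_ext_Dless:
  assumes c: "c \<in> L"
  shows "comm L c d_ext \<in> Dless K L n"
proof -
  obtain b t where bt: "b \<in> A" "t \<in> S" "c = b / t" using c by (rule locE)
  have nz: "t \<noteq> 0" and tA: "t \<in> A" using bt S_nonzero S_in_A by auto
  define F where "F = mulop L (1 / t) \<circ> fadd (E b) (fneg (E t \<circ> mulop L c))"
  have "F \<in> Dless K L n"
    unfolding F_def
    by (intro mulop_comp_Dless[OF sub_ring_L K_subset_L inverse_in_L] fadd_Dless[OF sub_ring_L]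
        fneg_Dless[OF sub_ring_L] E_Dless bt tA comp_mulop_Dless[OF sub_ring_L K_subset_L c])
  moreover have "comm L c d_ext = F"
  proof (rule endK_eqI)
    show "comm L c d_ext \<in> endK K L" using comm_endK[OF sub_ring_L K_subset_L d_ext_endK c] .
    show "F \<in> endK K L"
      using \<open>F \<in> Dless K L n\<close> Dless_endK[OF sub_ring_L] by blast
    fix y assume y: "y \<in> L"
    have cy: "c * y \<in> L" using c y sub_ring_L by simp
    have tc: "t * (c * y) = b * y" using bt nz by simp
    have "E t (c * y) = t * d_ext (c * y) - d_ext (b * y)"
      using fun_cong[OF comm_d_ext_A[OF tA], of "c * y"] comm_apply[OF sub_ring_L d_ext_endK, of t "c * y"]
        tA A_subset_L cy tc by auto
    moreover have "E b y = b * d_ext y - d_ext (b * y)"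
      using fun_cong[OF comm_d_ext_A[OF bt(1)], of y] comm_apply[OF sub_ring_L d_ext_endK, of b y]
        bt A_subset_L y by auto
    moreover have "E b y + - E t (c * y) \<in> L"
      using endK_range[OF sub_ring_L E_endK[OF bt(1)]] endK_range[OF sub_ring_L E_endK[OF tA]]
        sub_ring_L by simp
    ultimately have "F y = (1 / t) * (b * d_ext y - t * d_ext (c * y))"
      using y by (simp add: F_def fadd_def fneg_def)
    also have "\<dots> = c * d_ext y - d_ext (c * y)" using bt nz by (simp add: field_simps)
    also have "\<dots> = comm L c d_ext y" using comm_apply[OF sub_ring_L d_ext_endK c, of y] y by simp
    finally show "comm L c d_ext y = F y" by simp
  qed
  ultimately show ?thesis by simp
qed

lemma d_ext_Dless: "d_ext \<in> Dless K L (Suc n)"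
  using d_ext_endK comm_d_ext_Dless by (simp add: Dless_Suc)

end

context localized_domain
begin

lemma Dless_extension_exists:
  "d \<in> Dless K A n \<Longrightarrow> \<exists>e\<in>Dless K L n. \<forall>y\<in>A. e y = d y"
proof (induction n arbitrary: d)
  case 0
  then show ?case using sub_ring_L by auto
next
  case (Suc n)
  have "\<exists>e. e \<in> Dless K L n \<and> (\<forall>y\<in>A. e y = comm A a d y)" if "a \<in> A" for a
    using Suc.IH[of "comm A a d"] Suc.prems that by (auto simp: Dless_Suc)
  then obtain E where "\<And>a. a \<in> A \<Longrightarrow> E a \<in> Dless K L n \<and> (\<forall>y\<in>A. E a y = comm A a d y)"
    by metis
  then interpret extension_step K A S d n E
    by unfold_locales (simp_all add: Suc.prems)
  show ?case using d_ext_Dless d_ext_extends by blast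
qed

subsection \<open>Clearing denominators\<close>

lemma common_denominator:
  assumes "finite G" and "\<forall>g\<in>G. \<exists>s\<in>S. \<forall>y\<in>A. s * h g y \<in> A"
  shows "\<exists>s\<in>S. \<forall>g\<in>G. \<forall>y\<in>A. s * h g y \<in> A"
  using assms
proof (induction G rule: finite_induct)
  case empty
  then show ?case using one_in_S by blast
next
  case (insert g G)
  obtain s1 where s1: "s1 \<in> S" "\<forall>g\<in>G. \<forall>y\<in>A. s1 * h g y \<in> A"
    using insert by blast
  obtain s2 where s2: "s2 \<in> S" "\<forall>y\<in>A. s2 * h g y \<in> A"
    using insert.prems by blast
  have "(s1 * s2) * h g' y \<in> A" if "g' \<in> insert g G" "y \<in> A" for g' y
  proof (cases "g' = g")
    case True
    then show ?thesis
      using s2(2) that(2) S_in_A[OF s1(1)] sub_ring_A sub_ring_mult by (metis mult.assoc)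
  next
    case False
    then show ?thesis
      using s1(2) that S_in_A[OF s2(1)] sub_ring_A sub_ring_mult by (metis insertE mult.commute mult.assoc)
  qed
  then show ?case using S_mult[OF s1(1) s2(1)] by blast
qed

lemma sub_ring_comm_cleared:
  assumes q: "q \<in> endK K L"
  shows "sub_ring {b \<in> A. \<forall>y\<in>A. s * comm L b q y \<in> A}" (is "sub_ring ?P")
  unfolding sub_ring_def
proof (intro conjI ballI)
  have "comm L 0 q y = 0" "comm L 1 q y = 0" for y
    using comm_apply[OF sub_ring_L q, of 0 y] comm_apply[OF sub_ring_L q, of 1 y] sub_ring_L q by simp_all
  then show "0 \<in> ?P" "1 \<in> ?P" using sub_ring_A by simp_all
next
  fix b1 b2 assume b: "b1 \<in> ?P" "b2 \<in> ?P"
  then have L: "b1 \<in> L" "b2 \<in> L" using A_subset_L by auto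
  show "b1 + b2 \<in> ?P"
    using b comm_add_left[OF sub_ring_L q L] sub_ring_A by (simp add: fadd_def distrib_left)
  show "b1 * b2 \<in> ?P"
    using b comm_mult_left_apply[OF sub_ring_L q L] A_subset_L sub_ring_A
    by (auto simp: subset_iff distrib_left mult.left_commute[of s b1])
next
  fix b assume "b \<in> ?P"
  then show "- b \<in> ?P"
    using comm_uminus_left[OF sub_ring_L q] A_subset_L sub_ring_A by (auto simp: fneg_def)
qed

lemma clear_denominators_by_comm:
  assumes q: "q \<in> endK K L"
    and B: "sub_ring B" "T \<subseteq> B" "1 \<in> T" "0 \<notin> T" and A_eq: "A = {b / t | b t. b \<in> B \<and> t \<in> T}"
    and s_q1: "s * q 1 \<in> A" and s_comm: "\<And>b y. b \<in> B \<Longrightarrow> y \<in> A \<Longrightarrow> s * comm L b q y \<in> A"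
    and y: "y \<in> A"
  shows "s * q y \<in> A"
proof -
  obtain b t where bt: "b \<in> B" "t \<in> T" "y = b / t" using y A_eq by blast
  have B_A: "B \<subseteq> A"
  proof
    fix a assume "a \<in> B"
    then have "a / 1 \<in> A" using A_eq B(3) by blast
    then show "a \<in> A" by simp
  qed
  have "1 / t \<in> A" using A_eq sub_ring_1[OF B(1)] bt(2) by blast
  then have t: "t \<in> A" "t \<noteq> 0" "1 / t \<in> A" using bt B B_A by auto
  have b: "b \<in> A" using bt B_A by blast
  have comm_A: "comm L a q z = a * q z - q (a * z)" if "a \<in> A" "z \<in> A" for a z
    using comm_apply[OF sub_ring_L q, of a z] that A_subset_L by (simp add: subset_iff)
  have "s * q b = b * (s * q 1) - s * comm L b q 1"
    unfolding comm_A[OF b sub_ring_1[OF sub_ring_A]] by (simp add: algebra_simps)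
  then have "s * q b \<in> A" using s_q1 s_comm[OF bt(1)] b sub_ring_A by simp
  moreover have "s * q y = (1 / t) * (s * q b + s * comm L t q y)"
    unfolding comm_A[OF t(1) y] using bt t(2) by (simp add: field_simps)
  moreover have "s * comm L t q y \<in> A" using s_comm[OF _ y] bt B by blast
  ultimately show ?thesis
    using sub_ring_mult[OF sub_ring_A t(3)] sub_ring_A by simp
qed

text \<open>The only use of finite type: a common denominator for \<open>q 1\<close> and the commutators of \<open>q\<close>
  with the finitely many generators, which exists by induction on the order.\<close>

lemma Dless_clear_denominators:
  assumes eft: "ess_finite_type K A"
  shows "q \<in> Dless K L n \<Longrightarrow> \<exists>s\<in>S. \<forall>y\<in>A. s * q y \<in> A"
proof (induction n arbitrary: q)
  case 0
  then show ?case using one_in_S sub_ring_A by (auto simp: fzero_def)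
next
  case (Suc n)
  obtain G T where G: "finite G" "G \<subseteq> A" and T: "T \<subseteq> alg_gen K G" "1 \<in> T" "0 \<notin> T"
    and A_eq: "A = {b / t | b t. b \<in> alg_gen K G \<and> t \<in> T}"
    using eft unfolding ess_finite_type_def mult_closed_def by blast
  have q: "q \<in> endK K L" and q_comm: "\<And>a. a \<in> L \<Longrightarrow> comm L a q \<in> Dless K L n"
    using Suc.prems by (simp_all add: Dless_Suc)
  have "\<forall>g\<in>G. \<exists>s\<in>S. \<forall>y\<in>A. s * comm L g q y \<in> A"
    using Suc.IH q_comm G(2) A_subset_L by blast
  then obtain sG where sG: "sG \<in> S" "\<forall>g\<in>G. \<forall>y\<in>A. sG * comm L g q y \<in> A"
    using common_denominator[OF G(1), of "\<lambda>g. comm L g q"] by blast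
  obtain x0 s0 where x0: "x0 \<in> A" "s0 \<in> S" "q 1 = x0 / s0"
    using endK_range[OF sub_ring_L q] by (rule locE)
  define s where "s = s0 * sG"
  have s: "s \<in> S" using x0 sG S_mult s_def by blast
  have "s * q 1 = sG * x0" using x0 S_nonzero s_def by simp
  then have "s * q 1 \<in> A" using sG(1) x0(1) S_in_A sub_ring_A by simp
  moreover have "alg_gen K G \<subseteq> {b \<in> A. \<forall>y\<in>A. s * comm L b q y \<in> A}"
  proof (rule alg_gen_least[OF sub_ring_comm_cleared[OF q]], intro subsetI)
    fix b assume "b \<in> K \<union> G"
    moreover have "comm L k q y = 0" if "k \<in> K" "y \<in> A" for k y
      using comm_apply[OF sub_ring_L q, of k y] endK_scalar[OF q that(1), of y]
        that K_subset_L A_subset_L by auto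
    moreover have "s * comm L g q y \<in> A" if "g \<in> G" "y \<in> A" for g y
    proof -
      have "s0 * (sG * comm L g q y) \<in> A" using sG(2) that x0(2) S_in_A sub_ring_A by simp
      then show ?thesis by (simp add: s_def mult.assoc)
    qed
    ultimately show "b \<in> {b \<in> A. \<forall>y\<in>A. s * comm L b q y \<in> A}"
      using K_subset_A G(2) sub_ring_A by auto
  qed
  ultimately have "\<forall>y\<in>A. s * q y \<in> A"
    using clear_denominators_by_comm[OF q sub_ring_alg_gen T A_eq] by blast
  then show ?case using s by blast
qed

subsection \<open>The extension map \<open>D(A) \<rightarrow> D(S\<^sup>-\<^sup>1A)\<close>\<close>

abbreviation \<phi> :: "('f \<Rightarrow> 'f) \<Rightarrow> 'f \<Rightarrow> 'f" where "\<phi> \<equiv> ext_op K A L"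

lemma ext_op_Diff_extends:
  assumes "d \<in> Diff K A"
  shows "\<phi> d \<in> Diff K L \<and> (\<forall>y\<in>A. \<phi> d y = d y)"
proof -
  obtain i where "d \<in> Dless K A i" using assms sub_ring_A by (blast elim: DiffE)
  then obtain e where e: "e \<in> Dless K L i" "\<forall>y\<in>A. e y = d y"
    using Dless_extension_exists by blast
  then have "e \<in> Diff K L" using Dless_Diff[OF sub_ring_L] by blast
  then have "\<exists>!e. e \<in> Diff K L \<and> (\<forall>y\<in>A. e y = d y)"
    using e(2) Diff_L_eqI by (metis (full_types))
  then show ?thesis unfolding ext_op_def by (rule theI')
qed

lemma ext_op_Diff: "d \<in> Diff K A \<Longrightarrow> \<phi> d \<in> Diff K L"
  and ext_op_extends: "d \<in> Diff K A \<Longrightarrow> y \<in> A \<Longrightarrow> \<phi> d y = d y"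
  using ext_op_Diff_extends by blast+

lemma ext_op_eqI: "d \<in> Diff K A \<Longrightarrow> e \<in> Diff K L \<Longrightarrow> \<forall>y\<in>A. e y = d y \<Longrightarrow> \<phi> d = e"
  using Diff_L_eqI ext_op_Diff ext_op_extends by simp

lemma ext_op_inj:
  assumes "d1 \<in> Diff K A" "d2 \<in> Diff K A" "\<phi> d1 = \<phi> d2"
  shows "d1 = d2"
  using Diff_endK[OF sub_ring_A] assms
  by (intro endK_eqI[of d1 K A d2]) (simp_all, metis ext_op_extends)

lemma ext_op_fzero: "\<phi> fzero = fzero"
  using ext_op_eqI fzero_Diff sub_ring_A sub_ring_L by blast

lemma ext_op_fadd:
  assumes "d1 \<in> Diff K A" "d2 \<in> Diff K A"
  shows "\<phi> (fadd d1 d2) = fadd (\<phi> d1) (\<phi> d2)"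
proof (rule ext_op_eqI)
  show "fadd d1 d2 \<in> Diff K A" "fadd (\<phi> d1) (\<phi> d2) \<in> Diff K L"
    using assms fadd_Diff sub_ring_A sub_ring_L ext_op_Diff by blast+
qed (simp add: assms ext_op_extends fadd_def)

lemma ext_op_fneg:
  assumes "d \<in> Diff K A"
  shows "\<phi> (fneg d) = fneg (\<phi> d)"
proof (rule ext_op_eqI)
  show "fneg d \<in> Diff K A" "fneg (\<phi> d) \<in> Diff K L"
    using assms fneg_Diff sub_ring_A sub_ring_L ext_op_Diff by blast+
qed (simp add: assms ext_op_extends fneg_def)

lemma ext_op_comp:
  assumes d1: "d1 \<in> Diff K A" and d2: "d2 \<in> Diff K A"
  shows "\<phi> (d1 \<circ> d2) = \<phi> d1 \<circ> \<phi> d2"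
proof (rule ext_op_eqI)
  show "d1 \<circ> d2 \<in> Diff K A" using comp_Diff[OF sub_ring_A d1 d2] .
  show "\<phi> d1 \<circ> \<phi> d2 \<in> Diff K L" using comp_Diff[OF sub_ring_L ext_op_Diff[OF d1] ext_op_Diff[OF d2]] .
  show "\<forall>y\<in>A. (\<phi> d1 \<circ> \<phi> d2) y = (d1 \<circ> d2) y"
    using endK_in[OF Diff_endK[OF sub_ring_A d2]] ext_op_extends d1 d2 by simp
qed

lemma ext_op_mulop: "a \<in> A \<Longrightarrow> \<phi> (mulop A a) = mulop L a"
  using A_subset_L
  by (intro ext_op_eqI mulop_Diff sub_ring_A K_subset_A sub_ring_L K_subset_L) auto

lemma restrict_Dless:
  "q \<in> Dless K L n \<Longrightarrow> \<forall>y\<in>A. q y \<in> A \<Longrightarrow> (\<lambda>x. if x \<in> A then q x else 0) \<in> Dless K A n"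
proof (induction n arbitrary: q)
  case 0
  then have "q = fzero" by simp
  then show ?case by (auto simp: fzero_def)
next
  case (Suc n)
  let ?r = "\<lambda>x. if x \<in> A then q x else 0"
  have q: "q \<in> endK K L" using Suc.prems by (simp add: Dless_Suc)
  have r: "?r \<in> endK K A"
    unfolding endK_def
    using endK_add[OF q] endK_scalar[OF q] A_subset_L sub_ring_A K_subset_A Suc.prems(2)
    by (auto simp: subset_iff)
  have "comm A a ?r \<in> Dless K A n" if a: "a \<in> A" for a
  proof -
    have aL: "a \<in> L" using a A_subset_L by blast
    have "\<forall>y\<in>A. comm L a q y \<in> A"
      using comm_apply[OF sub_ring_L q aL] A_subset_L Suc.prems(2) a sub_ring_A by auto
    moreover have "comm A a ?r = (\<lambda>x. if x \<in> A then comm L a q x else 0)"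
      using comm_apply[OF sub_ring_A r a] comm_apply[OF sub_ring_L q aL] A_subset_L a sub_ring_A
      by (auto simp: fun_eq_iff)
    ultimately show ?thesis
      using Suc.IH Suc.prems(1) aL by (simp add: Dless_Suc)
  qed
  then show ?case using r by (simp add: Dless_Suc)
qed

lemma Diff_L_left_fraction:
  assumes eft: "ess_finite_type K A" and q: "q \<in> Diff K L"
  shows "\<exists>s\<in>S. \<exists>r\<in>Diff K A. mulop L s \<circ> q = \<phi> r"
proof -
  obtain n where qn: "q \<in> Dless K L n" using q sub_ring_L by (blast elim: DiffE)
  obtain s where s: "s \<in> S" "\<forall>y\<in>A. s * q y \<in> A"
    using Dless_clear_denominators[OF eft qn] by blast
  have sL: "s \<in> L" using s S_in_A A_subset_L by blast
  let ?q = "mulop L s \<circ> q"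
  have "?q \<in> Dless K L n" using mulop_comp_Dless[OF sub_ring_L K_subset_L sL qn] .
  moreover have "\<forall>y\<in>A. ?q y \<in> A"
    using s endK_range[OF sub_ring_L Dless_endK[OF sub_ring_L qn]] by simp
  ultimately have r: "(\<lambda>x. if x \<in> A then ?q x else 0) \<in> Diff K A" (is "?r \<in> _")
    using restrict_Dless Dless_Diff[OF sub_ring_A] by blast
  have "\<phi> ?r = ?q"
    using r \<open>?q \<in> Dless K L n\<close> Dless_Diff[OF sub_ring_L] by (intro ext_op_eqI) auto
  then show ?thesis using s r by metis
qed

subsection \<open>Rings of fractions\<close>

abbreviation S_inv :: "('f \<Rightarrow> 'f) set \<Rightarrow> ('f \<Rightarrow> 'f) set" where
  "S_inv R \<equiv> frac_image (Diff K L) \<phi> R (mulop A ` S)"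

lemma mem_S_inv: "q \<in> S_inv R \<longleftrightarrow> q \<in> Diff K L \<and> (\<exists>s\<in>S. \<exists>r\<in>R. mulop L s \<circ> q = \<phi> r)"
  unfolding frac_image_def using ext_op_mulop S_in_A by force

lemma S_inv_subset: "S_inv R \<subseteq> Diff K L"
  by (simp add: frac_image_def)

lemma regular_in_mulop:
  assumes R: "subalg_containing R K A" and s: "s \<in> S"
  shows "regular_in R (mulop A s)"
  unfolding regular_in_def
proof (intro conjI ballI impI)
  fix r assume r: "r \<in> R"
  show "mulop A s \<circ> r = fzero \<Longrightarrow> r = fzero"
    using mulop_comp_eq_fzeroD[OF sub_ring_A S_nonzero[OF s] subalg_containing_endK[OF sub_ring_A R r]] .
  obtain n where "r \<in> Dless K A n" using subalg_containing_Dless[OF sub_ring_A R r] .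
  then show "r \<circ> mulop A s = fzero \<Longrightarrow> r = fzero"
    using Dless_comp_mulop_eq_fzeroD[OF sub_ring_A S_in_A[OF s] S_nonzero[OF s]] by blast
qed

lemma left_denominator_set_mulop:
  assumes R: "subalg_containing R K A"
  shows "left_denominator_set R (mulop A ` S)"
  unfolding left_denominator_set_def
proof (intro conjI ballI impI)
  show "mulop A ` S \<subseteq> R" using subalg_containing_mulop[OF R] S_in_A by blast
next
  fix s r assume "s \<in> mulop A ` S" and r: "r \<in> R"
  then obtain s0 where s0: "s0 \<in> S" "s = mulop A s0" by blast
  obtain n where "r \<in> Dless K A n" using subalg_containing_Dless[OF sub_ring_A R r] .
  then obtain r' where "r' \<in> R" "mulop A (s0 ^ n) \<circ> r = r' \<circ> mulop A s0"
    using ore_left_power[OF sub_ring_A R S_in_A[OF s0(1)] r] by blast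
  moreover have "mulop A (s0 ^ n) \<in> mulop A ` S" using mult_closed_power[OF mult_closed_S s0(1)] by blast
  ultimately show "\<exists>s'\<in>mulop A ` S. \<exists>r'\<in>R. s' \<circ> r = r' \<circ> s" using s0 by blast
next
  fix s r assume "s \<in> mulop A ` S" "r \<in> R" "r \<circ> s = fzero"
  then have "r = fzero" using regular_in_mulop[OF R] by (auto simp: regular_in_def)
  then show "\<exists>s'\<in>mulop A ` S. s' \<circ> r = fzero" using one_in_S by auto
qed

lemma right_denominator_set_mulop:
  assumes R: "subalg_containing R K A"
  shows "right_denominator_set R (mulop A ` S)"
  unfolding right_denominator_set_def
proof (intro conjI ballI impI)
  show "mulop A ` S \<subseteq> R" using subalg_containing_mulop[OF R] S_in_A by blast
next
  fix s r assume "s \<in> mulop A ` S" and r: "r \<in> R"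
  then obtain s0 where s0: "s0 \<in> S" "s = mulop A s0" by blast
  obtain n where "r \<in> Dless K A n" using subalg_containing_Dless[OF sub_ring_A R r] .
  then obtain r' where "r' \<in> R" "r \<circ> mulop A (s0 ^ n) = mulop A s0 \<circ> r'"
    using ore_right_power[OF sub_ring_A R S_in_A[OF s0(1)] r] by blast
  moreover have "mulop A (s0 ^ n) \<in> mulop A ` S" using mult_closed_power[OF mult_closed_S s0(1)] by blast
  ultimately show "\<exists>s'\<in>mulop A ` S. \<exists>r'\<in>R. r \<circ> s' = s \<circ> r'" using s0 by blast
next
  fix s r assume "s \<in> mulop A ` S" "r \<in> R" "s \<circ> r = fzero"
  then have "r = fzero" using regular_in_mulop[OF R] by (auto simp: regular_in_def)
  then show "\<exists>s'\<in>mulop A ` S. r \<circ> s' = fzero" using one_in_S by auto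
qed

lemma ext_op_eq_fzero_iff:
  assumes R: "subalg_containing R K A" and r: "r \<in> R"
  shows "\<phi> r = fzero \<longleftrightarrow> (\<exists>s\<in>mulop A ` S. s \<circ> r = fzero)"
    and "\<phi> r = fzero \<longleftrightarrow> (\<exists>s\<in>mulop A ` S. r \<circ> s = fzero)"
proof -
  have "\<phi> r = fzero \<longleftrightarrow> r = fzero"
    using ext_op_inj[of r fzero] ext_op_fzero subalg_containing_Diff[OF R] r
      fzero_Diff[OF sub_ring_A, of K]
    by auto
  then show "\<phi> r = fzero \<longleftrightarrow> (\<exists>s\<in>mulop A ` S. s \<circ> r = fzero)"
    and "\<phi> r = fzero \<longleftrightarrow> (\<exists>s\<in>mulop A ` S. r \<circ> s = fzero)"
    using regular_in_mulop[OF R] r one_in_S by (auto simp: regular_in_def)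
qed

text \<open>A left fraction \<open>s\<^sup>-\<^sup>1 r\<close> is also a right fraction: the Ore condition gives
  \<open>r s\<^sup>n = s r'\<close>, whence \<open>q s\<^sup>n = r'\<close> after cancelling \<open>s\<close>.\<close>

lemma right_fraction_if_left_fraction:
  assumes R: "subalg_containing R K A" and q: "q \<in> Diff K L" and s: "s \<in> S" and r: "r \<in> R"
    and q_eq: "mulop L s \<circ> q = \<phi> r"
  shows "\<exists>s'\<in>S. \<exists>r'\<in>R. q \<circ> mulop L s' = \<phi> r'"
proof -
  obtain n where "r \<in> Dless K A n" using subalg_containing_Dless[OF sub_ring_A R r] .
  then obtain r' where r': "r' \<in> R" "r \<circ> mulop A (s ^ n) = mulop A s \<circ> r'"
    using ore_right_power[OF sub_ring_A R S_in_A[OF s] r] by blast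
  have sA: "s \<in> A" "s ^ n \<in> A" using S_in_A[OF s] sub_ring_A by simp_all
  have rD: "r \<in> Diff K A" "r' \<in> Diff K A" using subalg_containing_Diff[OF R] r r'(1) by auto
  have mD: "mulop A s \<in> Diff K A" "mulop A (s ^ n) \<in> Diff K A"
    using mulop_Diff[OF sub_ring_A K_subset_A] sA by blast+
  have "mulop L s \<circ> (q \<circ> mulop L (s ^ n)) = \<phi> r \<circ> \<phi> (mulop A (s ^ n))"
    using q_eq ext_op_mulop[OF sA(2)] by (simp add: o_assoc)
  also have "\<dots> = \<phi> (r \<circ> mulop A (s ^ n))" using ext_op_comp[OF rD(1) mD(2)] by simp
  also have "\<dots> = \<phi> (mulop A s) \<circ> \<phi> r'" using r'(2) ext_op_comp[OF mD(1) rD(2)] by simp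
  also have "\<dots> = mulop L s \<circ> \<phi> r'" using ext_op_mulop[OF sA(1)] by simp
  finally have eq: "mulop L s \<circ> (q \<circ> mulop L (s ^ n)) = mulop L s \<circ> \<phi> r'" .
  have "s ^ n \<in> L" using sA(2) A_subset_L by blast
  then have "q \<circ> mulop L (s ^ n) \<in> endK K L"
    using comp_endK[OF sub_ring_L Diff_endK[OF sub_ring_L q] mulop_endK[OF sub_ring_L K_subset_L]] by blast
  moreover have "\<phi> r' \<in> endK K L" using Diff_endK[OF sub_ring_L ext_op_Diff[OF rD(2)]] .
  ultimately have "q \<circ> mulop L (s ^ n) = \<phi> r'"
    using mulop_comp_cancel[OF sub_ring_L S_nonzero[OF s] _ _ eq] by blast
  then show ?thesis using mult_closed_power[OF mult_closed_S s] r'(1) by blast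
qed

lemma S_inv_fadd:
  assumes R: "subalg_containing R K A" and u: "u \<in> S_inv R" and v: "v \<in> S_inv R"
  shows "fadd u v \<in> S_inv R"
proof -
  obtain s1 r1 where uD: "u \<in> Diff K L" and s1: "s1 \<in> S" "r1 \<in> R" "mulop L s1 \<circ> u = \<phi> r1"
    using u mem_S_inv by blast
  obtain s2 r2 where vD: "v \<in> Diff K L" and s2: "s2 \<in> S" "r2 \<in> R" "mulop L s2 \<circ> v = \<phi> r2"
    using v mem_S_inv by blast
  have sA: "s1 \<in> A" "s2 \<in> A" using s1 s2 S_in_A by auto
  have rD: "r1 \<in> Diff K A" "r2 \<in> Diff K A" using subalg_containing_Diff[OF R] s1 s2 by auto
  have ue: "u \<in> endK K L" and ve: "v \<in> endK K L" using uD vD Diff_endK[OF sub_ring_L] by auto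
  define r where "r = fadd (mulop A s2 \<circ> r1) (mulop A s1 \<circ> r2)"
  have "r \<in> R"
    unfolding r_def using R sA s1 s2
    by (simp add: subalg_containing_fadd subalg_containing_comp subalg_containing_mulop)
  have "\<phi> r = fadd (mulop L s2 \<circ> \<phi> r1) (mulop L s1 \<circ> \<phi> r2)"
    unfolding r_def
    using ext_op_fadd comp_Diff[OF sub_ring_A] mulop_Diff[OF sub_ring_A K_subset_A] ext_op_comp
      ext_op_mulop sA rD by metis
  also have "\<dots> = mulop L (s1 * s2) \<circ> fadd u v"
  proof
    fix x
    have "\<phi> r1 x = s1 * u x" "\<phi> r2 x = s2 * v x"
      using fun_cong[OF s1(3), of x] fun_cong[OF s2(3), of x]
        endK_range[OF sub_ring_L ue] endK_range[OF sub_ring_L ve] by auto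
    then show "fadd (mulop L s2 \<circ> \<phi> r1) (mulop L s1 \<circ> \<phi> r2) x = (mulop L (s1 * s2) \<circ> fadd u v) x"
      using endK_range[OF sub_ring_L ue, of x] endK_range[OF sub_ring_L ve, of x] sub_ring_L
        endK_range[OF sub_ring_L Diff_endK[OF sub_ring_L ext_op_Diff[OF rD(1)]], of x]
        endK_range[OF sub_ring_L Diff_endK[OF sub_ring_L ext_op_Diff[OF rD(2)]], of x]
      by (simp add: fadd_def algebra_simps)
  qed
  finally show ?thesis
    unfolding mem_S_inv using fadd_Diff[OF sub_ring_L uD vD] S_mult[OF s1(1) s2(1)] \<open>r \<in> R\<close> by metis
qed

text \<open>With the Ore relation \<open>s\<^sub>2\<^sup>n r\<^sub>1 = r' s\<^sub>2\<close>: \<open>(s\<^sub>2\<^sup>n s\<^sub>1) u v = s\<^sub>2\<^sup>n r\<^sub>1 v = r' s\<^sub>2 v = r' r\<^sub>2\<close>.\<close>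

lemma S_inv_comp:
  assumes R: "subalg_containing R K A" and u: "u \<in> S_inv R" and v: "v \<in> S_inv R"
  shows "u \<circ> v \<in> S_inv R"
proof -
  obtain s1 r1 where uD: "u \<in> Diff K L" and s1: "s1 \<in> S" "r1 \<in> R" "mulop L s1 \<circ> u = \<phi> r1"
    using u mem_S_inv by blast
  obtain s2 r2 where vD: "v \<in> Diff K L" and s2: "s2 \<in> S" "r2 \<in> R" "mulop L s2 \<circ> v = \<phi> r2"
    using v mem_S_inv by blast
  have sA: "s1 \<in> A" "s2 \<in> A" using s1 s2 S_in_A by auto
  have rD: "r1 \<in> Diff K A" "r2 \<in> Diff K A" using subalg_containing_Diff[OF R] s1 s2 by auto
  obtain n where "r1 \<in> Dless K A n" using subalg_containing_Dless[OF sub_ring_A R s1(2)] .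
  then obtain r' where r': "r' \<in> R" "mulop A (s2 ^ n) \<circ> r1 = r' \<circ> mulop A s2"
    using ore_left_power[OF sub_ring_A R sA(2) s1(2)] by blast
  have r'D: "r' \<in> Diff K A" using subalg_containing_Diff[OF R] r' by auto
  have snA: "s2 ^ n \<in> A" using sA(2) sub_ring_A by simp
  have "mulop L (s2 ^ n * s1) \<circ> (u \<circ> v) = mulop L (s2 ^ n) \<circ> (mulop L s1 \<circ> u) \<circ> v"
    using mulop_mult[OF sub_ring_L, of s1 "s2 ^ n"] sA(1) A_subset_L by (auto simp: o_assoc)
  also have "\<dots> = \<phi> (mulop A (s2 ^ n) \<circ> r1) \<circ> v"
    using s1(3) ext_op_comp[OF mulop_Diff[OF sub_ring_A K_subset_A snA] rD(1)] ext_op_mulop[OF snA]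
    by simp
  also have "\<dots> = \<phi> r' \<circ> (mulop L s2 \<circ> v)"
    using r'(2) ext_op_comp[OF r'D mulop_Diff[OF sub_ring_A K_subset_A sA(2)]] ext_op_mulop[OF sA(2)]
    by (simp add: o_assoc)
  also have "\<dots> = \<phi> (r' \<circ> r2)" using s2(3) ext_op_comp[OF r'D rD(2)] by simp
  finally show ?thesis
    unfolding mem_S_inv
    using comp_Diff[OF sub_ring_L uD vD] subalg_containing_comp[OF R r'(1) s2(2)]
      S_mult[OF mult_closed_power[OF mult_closed_S s2(1)] s1(1)]
    by blast
qed

lemma S_inv_fneg:
  assumes R: "subalg_containing R K A" and u: "u \<in> S_inv R"
  shows "fneg u \<in> S_inv R"
proof -
  obtain s r where uD: "u \<in> Diff K L" and s: "s \<in> S" "r \<in> R" "mulop L s \<circ> u = \<phi> r"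
    using u mem_S_inv by blast
  have "mulop L s \<circ> fneg u = fneg (mulop L s \<circ> u)"
    using endK_range[OF sub_ring_L Diff_endK[OF sub_ring_L uD]] sub_ring_L
    by (simp add: fun_eq_iff fneg_def)
  also have "\<dots> = \<phi> (fneg r)"
    using s(3) ext_op_fneg subalg_containing_Diff[OF R] s(2) by auto
  finally show ?thesis
    unfolding mem_S_inv using fneg_Diff[OF sub_ring_L uD] s subalg_containing_fneg[OF R] by blast
qed

lemma ext_op_in_S_inv:
  assumes R: "subalg_containing R K A" and r: "r \<in> R"
  shows "\<phi> r \<in> S_inv R"
proof -
  have "\<phi> r \<in> Diff K L" using ext_op_Diff subalg_containing_Diff[OF R] r by blast
  moreover have "mulop L 1 \<circ> \<phi> r = \<phi> r"
    using mulop_1_comp[OF sub_ring_L Diff_endK[OF sub_ring_L calculation]] .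
  ultimately show ?thesis unfolding mem_S_inv using one_in_S r by blast
qed

lemma inverse_in_S_inv:
  assumes R: "subalg_containing R K A" and s: "s \<in> S"
  shows "mulop L (1 / s) \<in> S_inv R"
proof -
  have "mulop L s \<circ> mulop L (1 / s) = mulop L 1"
    using mulop_mult[OF sub_ring_L inverse_in_L[OF s], of s] S_nonzero[OF s] by simp
  also have "\<dots> = \<phi> (mulop A 1)" using ext_op_mulop sub_ring_A by simp
  finally show ?thesis
    unfolding mem_S_inv
    using mulop_Diff[OF sub_ring_L K_subset_L inverse_in_L[OF s]] s
      subalg_containing_mulop[OF R sub_ring_1[OF sub_ring_A]] by blast
qed

lemma op_ring_S_inv:
  assumes R: "subalg_containing R K A"
  shows "op_ring (S_inv R) (mulop L 1)"
  unfolding op_ring_def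
proof (intro conjI ballI)
  show "mulop L 1 \<in> S_inv R"
    using ext_op_in_S_inv[OF R subalg_containing_mulop[OF R sub_ring_1[OF sub_ring_A]]]
    by (simp add: ext_op_mulop sub_ring_A)
  show "fzero \<in> S_inv R"
    using ext_op_in_S_inv[OF R subalg_containing_fzero[OF sub_ring_A R]] by (simp add: ext_op_fzero)
  fix u assume "u \<in> S_inv R"
  then have "u \<in> endK K L" using S_inv_subset Diff_endK[OF sub_ring_L] by blast
  then show "mulop L 1 \<circ> u = u" "u \<circ> mulop L 1 = u"
    using mulop_1_comp comp_mulop_1 sub_ring_L by blast+
qed (use R S_inv_fadd S_inv_comp S_inv_fneg in blast)+

lemma frac_hom_S_inv:
  assumes R: "subalg_containing R K A"
  shows "frac_hom R (mulop A 1) (S_inv R) (mulop L 1) \<phi>"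
  unfolding frac_hom_def
proof (intro conjI ballI)
  show "\<phi> (mulop A 1) = mulop L 1" using ext_op_mulop sub_ring_A by simp
  fix r r' assume "r \<in> R" "r' \<in> R"
  then have "r \<in> Diff K A" "r' \<in> Diff K A" using subalg_containing_Diff[OF R] by auto
  then show "\<phi> (fadd r r') = fadd (\<phi> r) (\<phi> r')" "\<phi> (r \<circ> r') = \<phi> r \<circ> \<phi> r'"
    using ext_op_fadd ext_op_comp by auto
qed (use op_ring_S_inv[OF R] ext_op_in_S_inv[OF R] in auto)

lemma mulop_invertible_in_S_inv:
  assumes R: "subalg_containing R K A"
  shows "\<forall>s\<in>mulop A ` S. \<exists>t\<in>S_inv R. t \<circ> \<phi> s = mulop L 1 \<and> \<phi> s \<circ> t = mulop L 1"
proof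
  fix s assume "s \<in> mulop A ` S"
  then obtain s0 where s0: "s0 \<in> S" "s = mulop A s0" by blast
  have "\<phi> s = mulop L s0" using ext_op_mulop S_in_A s0 by blast
  moreover have "mulop L (1 / s0) \<circ> mulop L s0 = mulop L 1" "mulop L s0 \<circ> mulop L (1 / s0) = mulop L 1"
    using mulop_mult[OF sub_ring_L, of s0 "1 / s0"] mulop_mult[OF sub_ring_L inverse_in_L[OF s0(1)], of s0]
      S_in_A[OF s0(1)] A_subset_L S_nonzero[OF s0(1)] by auto
  ultimately show "\<exists>t\<in>S_inv R. t \<circ> \<phi> s = mulop L 1 \<and> \<phi> s \<circ> t = mulop L 1"
    using inverse_in_S_inv[OF R s0(1)] by metis
qed

lemma left_ring_of_fractions_S_inv:
  assumes R: "subalg_containing R K A"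
  shows "left_ring_of_fractions R (mulop A 1) (mulop A ` S) (S_inv R) (mulop L 1) \<phi>"
  unfolding left_ring_of_fractions_def
  using frac_hom_S_inv[OF R] mulop_invertible_in_S_inv[OF R] ext_op_eq_fzero_iff(1)[OF R]
  by (auto simp: frac_image_def)

lemma right_ring_of_fractions_S_inv:
  assumes R: "subalg_containing R K A"
  shows "right_ring_of_fractions R (mulop A 1) (mulop A ` S) (S_inv R) (mulop L 1) \<phi>"
  unfolding right_ring_of_fractions_def
proof (intro conjI ballI)
  fix q assume "q \<in> S_inv R"
  then obtain s r where "q \<in> Diff K L" "s \<in> S" "r \<in> R" "mulop L s \<circ> q = \<phi> r"
    using mem_S_inv by blast
  then obtain s' r' where "s' \<in> S" "r' \<in> R" "q \<circ> mulop L s' = \<phi> r'"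
    using right_fraction_if_left_fraction[OF R] by blast
  then show "\<exists>s\<in>mulop A ` S. \<exists>r\<in>R. q \<circ> \<phi> s = \<phi> r"
    using ext_op_mulop S_in_A by (metis image_eqI)
qed (use frac_hom_S_inv[OF R] mulop_invertible_in_S_inv[OF R] ext_op_eq_fzero_iff(2)[OF R] in auto)

lemma S_inv_Diff:
  assumes "ess_finite_type K A"
  shows "S_inv (Diff K A) = Diff K L"
  using Diff_L_left_fraction[OF assms] S_inv_subset by (auto simp: mem_S_inv)

lemma mulop_L_subset_S_inv:
  assumes R: "subalg_containing R K A"
  shows "mulop L ` L \<subseteq> S_inv R"
proof
  fix m assume "m \<in> mulop L ` L"
  then obtain c where c: "c \<in> L" "m = mulop L c" by blast
  then obtain x s where xs: "x \<in> A" "s \<in> S" "c = x / s" by (blast elim: locE)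
  have "mulop L s \<circ> mulop L c = mulop L (s * c)" using mulop_mult[OF sub_ring_L c(1)] by simp
  also have "s * c = x" using xs S_nonzero by simp
  also have "mulop L x = \<phi> (mulop A x)" using ext_op_mulop xs by simp
  finally show "m \<in> S_inv R"
    unfolding mem_S_inv c(2)
    using mulop_Diff[OF sub_ring_L K_subset_L c(1)] xs subalg_containing_mulop[OF R] by blast
qed

subsection \<open>Essentiality\<close>

lemma left_multiple_in_subalg:
  assumes R: "subalg_containing R K A" and eq: "S_inv R = Diff K L" and d: "d \<in> Diff K A"
  shows "\<exists>s\<in>S. mulop A s \<circ> d \<in> R"
proof -
  obtain s r where sr: "s \<in> S" "r \<in> R" "mulop L s \<circ> \<phi> d = \<phi> r"
    using eq ext_op_Diff[OF d] mem_S_inv by blast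
  have sA: "s \<in> A" using S_in_A sr(1) by blast
  have mD: "mulop A s \<in> Diff K A" using mulop_Diff[OF sub_ring_A K_subset_A sA] .
  have "\<phi> (mulop A s \<circ> d) = \<phi> r" using ext_op_comp[OF mD d] ext_op_mulop[OF sA] sr(3) by simp
  then have "mulop A s \<circ> d = r"
    using ext_op_inj comp_Diff[OF sub_ring_A mD d] subalg_containing_Diff[OF R] sr(2) by blast
  then show ?thesis using sr by blast
qed

lemma right_multiple_in_subalg:
  assumes R: "subalg_containing R K A" and eq: "S_inv R = Diff K L" and d: "d \<in> Diff K A"
  shows "\<exists>s\<in>S. d \<circ> mulop A s \<in> R"
proof -
  obtain s r where "s \<in> S" "r \<in> R" "mulop L s \<circ> \<phi> d = \<phi> r"
    using eq ext_op_Diff[OF d] mem_S_inv by blast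
  then obtain s' r' where sr: "s' \<in> S" "r' \<in> R" "\<phi> d \<circ> mulop L s' = \<phi> r'"
    using right_fraction_if_left_fraction[OF R ext_op_Diff[OF d]] by blast
  have sA: "s' \<in> A" using S_in_A sr(1) by blast
  have mD: "mulop A s' \<in> Diff K A" using mulop_Diff[OF sub_ring_A K_subset_A sA] .
  have "\<phi> (d \<circ> mulop A s') = \<phi> r'" using ext_op_comp[OF d mD] ext_op_mulop[OF sA] sr(3) by simp
  then have "d \<circ> mulop A s' = r'"
    using ext_op_inj comp_Diff[OF sub_ring_A d mD] subalg_containing_Diff[OF R] sr(2) by blast
  then show ?thesis using sr by blast
qed

lemma essential_left_if_S_inv_eq_Diff:
  assumes R: "subalg_containing R K A" and eq: "S_inv R = Diff K L"
  shows "essential_left R (Diff K A) R"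
  unfolding essential_left_def
proof (intro conjI allI impI)
  show "left_submodule R (Diff K A) R"
    unfolding left_submodule_def
    using subalg_containing_Diff[OF R] subalg_containing_fzero[OF sub_ring_A R]
      subalg_containing_fadd[OF R] subalg_containing_comp[OF R] by blast
  fix N assume N: "left_submodule R (Diff K A) N \<and> N \<noteq> {fzero}"
  then obtain d where d: "d \<in> N" "d \<noteq> fzero" by (auto simp: left_submodule_def)
  have dD: "d \<in> Diff K A" using d N by (auto simp: left_submodule_def)
  obtain s where s: "s \<in> S" "mulop A s \<circ> d \<in> R"
    using left_multiple_in_subalg[OF R eq dD] by blast
  have "mulop A s \<circ> d \<in> N"
    using N d subalg_containing_mulop[OF R S_in_A[OF s(1)]] by (auto simp: left_submodule_def)
  moreover have "mulop A s \<circ> d \<noteq> fzero"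
    using mulop_comp_eq_fzeroD[OF sub_ring_A S_nonzero[OF s(1)] Diff_endK[OF sub_ring_A dD]] d(2)
    by blast
  ultimately show "R \<inter> N \<noteq> {fzero}" using s(2) by blast
qed

lemma essential_right_if_S_inv_eq_Diff:
  assumes R: "subalg_containing R K A" and eq: "S_inv R = Diff K L"
  shows "essential_right R (Diff K A) R"
  unfolding essential_right_def
proof (intro conjI allI impI)
  show "right_submodule R (Diff K A) R"
    unfolding right_submodule_def
    using subalg_containing_Diff[OF R] subalg_containing_fzero[OF sub_ring_A R]
      subalg_containing_fadd[OF R] subalg_containing_comp[OF R] by blast
  fix N assume N: "right_submodule R (Diff K A) N \<and> N \<noteq> {fzero}"
  then obtain d where d: "d \<in> N" "d \<noteq> fzero" by (auto simp: right_submodule_def)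
  have dD: "d \<in> Diff K A" using d N by (auto simp: right_submodule_def)
  obtain s where s: "s \<in> S" "d \<circ> mulop A s \<in> R"
    using right_multiple_in_subalg[OF R eq dD] by blast
  have "d \<circ> mulop A s \<in> N"
    using N d subalg_containing_mulop[OF R S_in_A[OF s(1)]] by (auto simp: right_submodule_def)
  moreover obtain n where "d \<in> Dless K A n" using dD sub_ring_A by (blast elim: DiffE)
  then have "d \<circ> mulop A s \<noteq> fzero"
    using Dless_comp_mulop_eq_fzeroD[OF sub_ring_A S_in_A[OF s(1)] S_nonzero[OF s(1)]] d(2) by blast
  ultimately show "R \<inter> N \<noteq> {fzero}" using s(2) by blast
qed

end

theorem lemma3p3:
  fixes K A S :: "'f::field set" and R :: "('f \<Rightarrow> 'f) set"
  assumes "sub_field K" and "K \<subseteq> A" and "sub_ring A"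
    and "ess_finite_type K A"
    and "subalg_containing R K A"
    and "mult_closed S" and "S \<subseteq> A - {0}"
  shows "left_denominator_set R (mulop A ` S) \<and> right_denominator_set R (mulop A ` S)
       \<and> (\<forall>s\<in>S. regular_in R (mulop A s))
     \<and> left_ring_of_fractions R (mulop A 1) (mulop A ` S)
          (frac_image (Diff K (loc S A)) (ext_op K A (loc S A)) R (mulop A ` S))
          (mulop (loc S A) 1) (ext_op K A (loc S A))
     \<and> right_ring_of_fractions R (mulop A 1) (mulop A ` S)
          (frac_image (Diff K (loc S A)) (ext_op K A (loc S A)) R (mulop A ` S))
          (mulop (loc S A) 1) (ext_op K A (loc S A))
     \<and> left_ring_of_fractions (Diff K A) (mulop A 1) (mulop A ` S)
          (Diff K (loc S A)) (mulop (loc S A) 1) (ext_op K A (loc S A))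
     \<and> right_ring_of_fractions (Diff K A) (mulop A 1) (mulop A ` S)
          (Diff K (loc S A)) (mulop (loc S A) 1) (ext_op K A (loc S A))
     \<and> mulop (loc S A) ` (loc S A)
          \<subseteq> frac_image (Diff K (loc S A)) (ext_op K A (loc S A)) R (mulop A ` S)
     \<and> frac_image (Diff K (loc S A)) (ext_op K A (loc S A)) R (mulop A ` S) \<subseteq> Diff K (loc S A)
     \<and> (frac_image (Diff K (loc S A)) (ext_op K A (loc S A)) R (mulop A ` S) = Diff K (loc S A)
          \<longrightarrow> essential_left R (Diff K A) R \<and> essential_right R (Diff K A) R)"
proof -
  interpret localized_domain K A S
    using assms by unfold_locales
  note R = \<open>subalg_containing R K A\<close>
  have D: "subalg_containing (Diff K A) K A"
    using Diff_subalg_containing sub_ring_A K_subset_A by blast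
  have "left_ring_of_fractions (Diff K A) (mulop A 1) (mulop A ` S) (Diff K L) (mulop L 1) \<phi>"
    "right_ring_of_fractions (Diff K A) (mulop A 1) (mulop A ` S) (Diff K L) (mulop L 1) \<phi>"
    using left_ring_of_fractions_S_inv[OF D] right_ring_of_fractions_S_inv[OF D]
    unfolding S_inv_Diff[OF \<open>ess_finite_type K A\<close>] by blast+
  then show ?thesis
    using left_denominator_set_mulop[OF R] right_denominator_set_mulop[OF R] regular_in_mulop[OF R]
      left_ring_of_fractions_S_inv[OF R] right_ring_of_fractions_S_inv[OF R]
      mulop_L_subset_S_inv[OF R] S_inv_subset
      essential_left_if_S_inv_eq_Diff[OF R] essential_right_if_S_inv_eq_Diff[OF R]
    by blast
qed

end
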